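(* Let $\mathfrak g$ be a compact simple Lie algebra, $n=\dim\mathfrak g$, and $\phi=\phi^l$ a nonzero $\mathrm{Ad}(\mathfrak g)$-invariant $l$-form on $\mathfrak g$ with $3\le l\le n-3$. For $0\le k\le n$: (a) $\Lambda^k_{\phi_-}=*L_\phi(\Lambda^{n-l-k}\mathfrak g)=*L_\phi(\Lambda^{n-l-k}_{\phi_-})$; (b) $\Lambda^k_{\phi_-}\neq0$ if and only if $k\le n-l$; (c) $*L_\phi$ induces an isomorphism $\Lambda^{n-l-k}_{\phi_-}\to\Lambda^k_{\phi_-}$ (for $0\le k\le n-l$); in particular $\Lambda^0_{\phi_-}\cong\Lambda^{n-l}_{\phi_-}\cong\mathbb R$, $\Lambda^1_{\phi_-}\cong\Lambda^{n-l-1}_{\phi_-}\cong\Lambda^1\mathfrak g$, and $\Lambda^k_{\phi_-}=0$ for $n-l+1\le k\le n$. (d) $(-1)^{l+1}L_\phi d_{\mathfrak g}+d_{\mathfrak g}L_\phi=0=(-1)^{l+1}L_\phi\delta_{\mathfrak g}+\delta_{\mathfrak g}L_\phi$; consequently $L_\phi$ preserves the subspaces of $d_{\mathfrak g}$-harmonic, $d_{\mathfrak g}$-exact and $\delta_{\mathfrak g}$-exact elements of $\Lambda^*\mathfrak g$.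
   Context: Inner product $\langle,\rangle=-B$ ($B$ Killing form) on $\mathfrak g$, extended to $\Lambda^k\mathfrak g$, identifying $\mathfrak g\cong\mathfrak g^*$; $*$ the Hodge star for $\langle,\rangle$ and a fixed orientation. $L_\phi:\Lambda^k\mathfrak g\to\Lambda^{k+l}\mathfrak g$, $\gamma\mapsto\phi\wedge\gamma$. $\Lambda^k_{\phi_+}:=\{\beta\in\Lambda^k\mathfrak g:\phi\wedge\beta=0\}$ and $\Lambda^k_{\phi_-}$ its orthogonal complement in $\Lambda^k\mathfrak g$. $d_{\mathfrak g}$: on $\Lambda^1$, $\langle d_{\mathfrak g}v,x\wedge y\rangle=\langle v,[x,y]\rangle$, extended as a graded derivation of degree $+1$ ($d_{\mathfrak g}(\alpha\wedge\beta)=d_{\mathfrak g}\alpha\wedge\beta+(-1)^{\deg\alpha}\alpha\wedge d_{\mathfrak g}\beta$); $\delta_{\mathfrak g}$ its adjoint. Harmonic elements: $\ker d_{\mathfrak g}\cap\ker\delta_{\mathfrak g}$. *)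

theory Defs
  imports "HOL-Analysis.Analysis"
begin

text \<open>
The Lie algebra g is realised as real^'n with a basis e_i (i :: 'n) and structure
constants c, [e_i,e_j] = sum_k c i j k e_k.  The basis is assumed orthonormal for the inner
product -B (B the Killing form); every compact semisimple Lie algebra admits such a basis.
The exterior algebra Lambda^* g is real^('n set): the coordinate at I is the coefficient of
e_I = e_{i1} wedge ... wedge e_{ik} (i1 < ... < ik).  The orientation is the one of
e_{i1} wedge ... wedge e_{in} in the order of 'n.
\<close>

type_synonym 'n form = "real ^ ('n set)"

definition bracket :: "('n \<Rightarrow> 'n \<Rightarrow> 'n \<Rightarrow> real) \<Rightarrow> real^'n \<Rightarrow> real^'n \<Rightarrow> real^'n" where
  "bracket c x y = (\<chi> k. \<Sum>i\<in>UNIV. \<Sum>j\<in>UNIV. x $ i * y $ j * c i j k)"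

definition is_lie_algebra :: "('n::finite \<Rightarrow> 'n \<Rightarrow> 'n \<Rightarrow> real) \<Rightarrow> bool" where
  "is_lie_algebra c \<longleftrightarrow>
     (\<forall>i j k. c i j k = - c j i k) \<and>
     (\<forall>i j k p. (\<Sum>m\<in>UNIV. c i j m * c m k p + c j k m * c m i p + c k i m * c m j p) = 0)"

text \<open>Killing form on basis vectors: B(e_i,e_j) = tr(ad e_i o ad e_j).\<close>
definition killing :: "('n::finite \<Rightarrow> 'n \<Rightarrow> 'n \<Rightarrow> real) \<Rightarrow> 'n \<Rightarrow> 'n \<Rightarrow> real" where
  "killing c i j = (\<Sum>p\<in>UNIV. \<Sum>q\<in>UNIV. c i q p * c j p q)"

definition lie_ideal :: "('n::finite \<Rightarrow> 'n \<Rightarrow> 'n \<Rightarrow> real) \<Rightarrow> (real^'n) set \<Rightarrow> bool" where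
  "lie_ideal c S \<longleftrightarrow> subspace S \<and> (\<forall>x\<in>S. \<forall>y. bracket c x y \<in> S)"

definition compact_simple_orthonormal :: "('n::finite \<Rightarrow> 'n \<Rightarrow> 'n \<Rightarrow> real) \<Rightarrow> bool" where
  "compact_simple_orthonormal c \<longleftrightarrow>
     is_lie_algebra c \<and>
     (\<forall>i j. killing c i j = - (if i = j then 1 else 0)) \<and>
     (\<exists>x y. bracket c x y \<noteq> 0) \<and>
     (\<forall>S. lie_ideal c S \<longrightarrow> S = {0} \<or> S = UNIV)"

text \<open>Sign of the shuffle: e_I wedge e_J = shuffle_sign I J * e_(I union J) for disjoint I, J.\<close>
definition shuffle_sign :: "'n::linorder set \<Rightarrow> 'n set \<Rightarrow> real" where
  "shuffle_sign I J = (-1) ^ card {(i, j). i \<in> I \<and> j \<in> J \<and> j < i}"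

definition basis_form :: "'n::finite set \<Rightarrow> 'n form" where
  "basis_form I = (\<chi> K. if K = I then 1 else 0)"

definition Lam :: "int \<Rightarrow> ('n::finite) form set" where
  "Lam k = {\<omega>. \<forall>I. int (card I) \<noteq> k \<longrightarrow> \<omega> $ I = 0}"

definition wedge :: "('n::{finite,linorder}) form \<Rightarrow> 'n form \<Rightarrow> 'n form" (infixr "\<and>\<^sub>w" 70) where
  "wedge \<alpha> \<beta> = (\<chi> K. \<Sum>I\<in>Pow K. shuffle_sign I (K - I) * \<alpha> $ I * \<beta> $ (K - I))"

text \<open>Inner product extended from -B (basis e_I orthonormal).\<close>
definition form_inner :: "('n::finite) form \<Rightarrow> 'n form \<Rightarrow> real" where
  "form_inner \<alpha> \<beta> = (\<Sum>I\<in>UNIV. \<alpha> $ I * \<beta> $ I)"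

text \<open>Hodge star: alpha wedge *beta = <alpha,beta> vol, vol = e_UNIV.\<close>
definition hodge :: "('n::{finite,linorder}) form \<Rightarrow> 'n form" where
  "hodge \<alpha> = (\<chi> K. shuffle_sign (- K) K * \<alpha> $ (- K))"

definition L_op :: "('n::{finite,linorder}) form \<Rightarrow> 'n form \<Rightarrow> 'n form" where
  "L_op \<phi> \<gamma> = \<phi> \<and>\<^sub>w \<gamma>"

definition Lam_plus :: "('n::{finite,linorder}) form \<Rightarrow> int \<Rightarrow> 'n form set" where
  "Lam_plus \<phi> k = {\<beta> \<in> Lam k. \<phi> \<and>\<^sub>w \<beta> = 0}"

definition Lam_minus :: "('n::{finite,linorder}) form \<Rightarrow> int \<Rightarrow> 'n form set" where
  "Lam_minus \<phi> k = {\<beta> \<in> Lam k. \<forall>\<gamma>\<in>Lam_plus \<phi> k. form_inner \<beta> \<gamma> = 0}"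

text \<open>d on Lambda^1: the unique element with <d v, x wedge y> = <v,[x,y]>, namely
  d e_k = sum_{i<j} <e_k,[e_i,e_j]> e_i wedge e_j.\<close>
definition d1 :: "('n::{finite,linorder} \<Rightarrow> 'n \<Rightarrow> 'n \<Rightarrow> real) \<Rightarrow> 'n \<Rightarrow> 'n form" where
  "d1 c k = (\<chi> K. if card K = 2 then c (Min K) (Max K) k else 0)"

fun wedge_list :: "('n::{finite,linorder}) list \<Rightarrow> 'n form" where
  "wedge_list [] = basis_form {}"
| "wedge_list (j # js) = basis_form {j} \<and>\<^sub>w wedge_list js"

fun d_list :: "('n::{finite,linorder} \<Rightarrow> 'n \<Rightarrow> 'n \<Rightarrow> real) \<Rightarrow> 'n list \<Rightarrow> 'n form" where
  "d_list c [] = 0"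
| "d_list c (j # js) = d1 c j \<and>\<^sub>w wedge_list js - basis_form {j} \<and>\<^sub>w d_list c js"

definition d_g :: "('n::{finite,linorder} \<Rightarrow> 'n \<Rightarrow> 'n \<Rightarrow> real) \<Rightarrow> 'n form \<Rightarrow> 'n form" where
  "d_g c \<omega> = (\<Sum>J\<in>UNIV. \<omega> $ J *\<^sub>R d_list c (sorted_list_of_set J))"

text \<open>delta: the adjoint of d_g w.r.t. form_inner.\<close>
definition delta_g :: "('n::{finite,linorder} \<Rightarrow> 'n \<Rightarrow> 'n \<Rightarrow> real) \<Rightarrow> 'n form \<Rightarrow> 'n form" where
  "delta_g c \<omega> = (\<chi> I. form_inner (d_g c (basis_form I)) \<omega>)"

definition harmonic :: "('n::{finite,linorder} \<Rightarrow> 'n \<Rightarrow> 'n \<Rightarrow> real) \<Rightarrow> 'n form \<Rightarrow> bool" where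
  "harmonic c \<omega> \<longleftrightarrow> d_g c \<omega> = 0 \<and> delta_g c \<omega> = 0"

text \<open>Interior product with e_j (e_j is dual to itself under the orthonormal identification).\<close>
definition interior :: "('n::{finite,linorder}) \<Rightarrow> 'n form \<Rightarrow> 'n form" where
  "interior j \<omega> = (\<chi> K. if j \<in> K then 0 else shuffle_sign {j} K * \<omega> $ (insert j K))"

text \<open>Derivation extension of ad x to Lambda^* g:
  sum_{i,j} <e_i,[x,e_j]> e_i wedge interior e_j.\<close>
definition ad_action :: "('n::{finite,linorder} \<Rightarrow> 'n \<Rightarrow> 'n \<Rightarrow> real) \<Rightarrow> (real, 'n) vec \<Rightarrow> 'n form \<Rightarrow> 'n form" where
  "ad_action c x \<omega> = (\<Sum>i\<in>UNIV. \<Sum>j\<in>UNIV.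
      (bracket c x (axis j 1) $ i) *\<^sub>R (basis_form {i} \<and>\<^sub>w interior j \<omega>))"

definition ad_invariant :: "('n::{finite,linorder} \<Rightarrow> 'n \<Rightarrow> 'n \<Rightarrow> real) \<Rightarrow> 'n form \<Rightarrow> bool" where
  "ad_invariant c \<phi> \<longleftrightarrow> (\<forall>x. ad_action c x \<phi> = 0)"

end

theory Submission
  imports Defs
begin

text \<open>
  Write e_I for the basis form of I, p for an invariant l-form and n for
  the dimension.  Everything rests on three facts about the exterior algebra:
  the wedge product is associative and graded commutative, the Hodge star satisfies
  *(*a) = \<plusminus>a, and *L_p is, up to sign, the adjoint of L_p composed with *:
  x \<bullet> *(p \<and> u) = \<plusminus> (p \<and> x) \<bullet> *u.

  Parts (a)-(c) are linear algebra.  The adjointness shows that the image of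
  *L_p on Lambda^(n-l-k) is orthogonal to Lambda^k_+ = ker L_p, and that any
  k-form orthogonal to that image lies in ker L_p; hence the image is exactly
  Lambda^k_-.  On Lambda^k_- the map *L_p is injective, so it is a bijection.
  Nonvanishing below degree n-l comes from p \<and> e_B \<noteq> 0 for B disjoint from a
  support set of p.  The degree-1 statement uses simplicity: the kernel of
  x \<mapsto> p \<and> x on g is an ideal by invariance of p, hence zero.

  Part (d) uses the explicit formulas d = -1/2 \<Sum>_i e_i \<and> ad(e_i) and
  \<delta> = 1/2 \<Sum>_i ad(e_i) \<iota>_i (valid because the structure constants are totally
  antisymmetric for a -B-orthonormal basis).  Invariance of p means that every
  ad(e_i), a derivation, commutes with L_p; this gives d(p \<and> w) = (-1)^l p \<and> dw,
  and likewise for \<delta> once the cross term \<Sum>_i \<iota>_i p \<and> ad(e_i) w is shown to vanish.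
\<close>

abbreviation bf :: "'n::finite set \<Rightarrow> 'n form" where "bf \<equiv> basis_form"

definition inversions :: "'n::linorder set \<Rightarrow> 'n set \<Rightarrow> nat" where
  "inversions A B = card {(i, j). i \<in> A \<and> j \<in> B \<and> j < i}"

lemma shuffle_sign_inversions: "shuffle_sign A B = (-1) ^ inversions A B"
  by (simp add: shuffle_sign_def inversions_def)

lemma inversions_Un_left:
  fixes A B C :: "'n::{finite,linorder} set"
  assumes "A \<inter> B = {}"
  shows "inversions (A \<union> B) C = inversions A C + inversions B C"
proof -
  have "{(i,j). i \<in> A \<union> B \<and> j \<in> C \<and> j < i}
      = {(i,j). i \<in> A \<and> j \<in> C \<and> j < i} \<union> {(i,j). i \<in> B \<and> j \<in> C \<and> j < i}" by auto
  moreover have "{(i,j). i \<in> A \<and> j \<in> C \<and> j < i} \<inter> {(i,j). i \<in> B \<and> j \<in> C \<and> j < i} = {}"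
    using assms by auto
  ultimately show ?thesis unfolding inversions_def by (simp add: card_Un_disjoint)
qed

lemma inversions_Un_right:
  fixes A B C :: "'n::{finite,linorder} set"
  assumes "B \<inter> C = {}"
  shows "inversions A (B \<union> C) = inversions A B + inversions A C"
proof -
  have "{(i,j). i \<in> A \<and> j \<in> B \<union> C \<and> j < i}
      = {(i,j). i \<in> A \<and> j \<in> B \<and> j < i} \<union> {(i,j). i \<in> A \<and> j \<in> C \<and> j < i}" by auto
  moreover have "{(i,j). i \<in> A \<and> j \<in> B \<and> j < i} \<inter> {(i,j). i \<in> A \<and> j \<in> C \<and> j < i} = {}"
    using assms by auto
  ultimately show ?thesis unfolding inversions_def by (simp add: card_Un_disjoint)
qed

text \<open>Every pair of A \<times> B is an inversion of exactly one of (A,B) and (B,A).\<close>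
lemma inversions_swap:
  fixes A B :: "'n::{finite,linorder} set"
  assumes "A \<inter> B = {}"
  shows "inversions A B + inversions B A = card A * card B"
proof -
  have split: "A \<times> B = {(i,j). i \<in> A \<and> j \<in> B \<and> j < i} \<union> {(i,j). i \<in> A \<and> j \<in> B \<and> i < j}"
    using assms by (auto simp: neq_iff)
  have disj: "{(i,j). i \<in> A \<and> j \<in> B \<and> j < i} \<inter> {(i,j). i \<in> A \<and> j \<in> B \<and> i < j} = {}" by auto
  have swap: "{(i,j). i \<in> A \<and> j \<in> B \<and> i < j} = prod.swap ` {(i,j). i \<in> B \<and> j \<in> A \<and> j < i}"
    by (auto simp: image_iff)
  have "card {(i,j). i \<in> A \<and> j \<in> B \<and> i < j} = inversions B A"
    unfolding swap inversions_def by (rule card_image) (simp add: inj_on_def)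
  moreover have "card (A \<times> B) = card A * card B" by (simp add: card_cartesian_product)
  ultimately show ?thesis unfolding inversions_def using split disj by (simp add: card_Un_disjoint)
qed

lemma minus_one_power_square [simp]: "(-1::real) ^ m * (-1) ^ m = 1"
  by (simp flip: power_add)

lemma shuffle_sign_square [simp]: "shuffle_sign A B * shuffle_sign A B = 1"
  by (simp add: shuffle_sign_inversions)

lemma shuffle_sign_nonzero [simp]: "shuffle_sign A B \<noteq> 0"
  by (simp add: shuffle_sign_def)

lemma shuffle_sign_empty_left [simp]: "shuffle_sign {} B = 1"
  by (simp add: shuffle_sign_def)

lemma shuffle_sign_empty_right [simp]: "shuffle_sign A {} = 1"
  by (simp add: shuffle_sign_def)

lemma shuffle_sign_Un_left:
  "A \<inter> B = {} \<Longrightarrow>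
   shuffle_sign (A \<union> B) (C::'n::{finite,linorder} set) = shuffle_sign A C * shuffle_sign B C"
  by (simp add: shuffle_sign_inversions inversions_Un_left power_add)

lemma shuffle_sign_Un_right:
  "B \<inter> C = {} \<Longrightarrow>
   shuffle_sign (A::'n::{finite,linorder} set) (B \<union> C) = shuffle_sign A B * shuffle_sign A C"
  by (simp add: shuffle_sign_inversions inversions_Un_right power_add)

lemma shuffle_sign_swap:
  "A \<inter> B = {} \<Longrightarrow>
   shuffle_sign (A::'n::{finite,linorder} set) B * shuffle_sign B A = (-1) ^ (card A * card B)"
  by (simp add: shuffle_sign_inversions inversions_swap flip: power_add)

lemma shuffle_sign_commute:
  assumes "A \<inter> B = {}"
  shows "shuffle_sign (A::'n::{finite,linorder} set) B = (-1) ^ (card A * card B) * shuffle_sign B A"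
proof -
  have "shuffle_sign A B * shuffle_sign B A * shuffle_sign B A
      = (-1) ^ (card A * card B) * shuffle_sign B A"
    using shuffle_sign_swap[OF assms] by simp
  thus ?thesis by (simp add: mult.assoc)
qed

lemma shuffle_sign_below: "\<forall>x\<in>I. m < x \<Longrightarrow> shuffle_sign {m} I = 1"
proof -
  assume "\<forall>x\<in>I. m < x"
  hence "{(i, j). i \<in> {m} \<and> j \<in> I \<and> j < i} = {}" by auto
  thus ?thesis by (simp only: shuffle_sign_def card.empty power_0)
qed

lemma shuffle_sign_singletons:
  "(i::'n::{finite,linorder}) \<noteq> j \<Longrightarrow> shuffle_sign {i} {j} * shuffle_sign {j} {i} = -1"
  using shuffle_sign_swap[of "{i}" "{j}"] by simp

lemma bf_nth: "bf I $ K = (if K = I then 1 else 0)"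
  by (simp add: basis_form_def)

lemma form_expand: "(x::'n::finite form) = (\<Sum>I\<in>UNIV. x $ I *\<^sub>R bf I)"
  by (simp add: vec_eq_iff bf_nth sum_component if_distrib cong: if_cong)

lemma form_inner_eq: "form_inner x y = x \<bullet> y"
  by (simp add: form_inner_def inner_vec_def)

lemma inner_bf_right: "x \<bullet> bf I = x $ I"
  by (simp add: inner_vec_def bf_nth if_distrib cong: if_cong)

lemma inner_bf_left: "bf I \<bullet> x = x $ I"
  by (simp add: inner_commute inner_bf_right)

lemma form_eq_coords: "(\<And>I. (x::'n::finite form) $ I = y $ I) \<Longrightarrow> x = y"
  by (simp add: vec_eq_iff)

text \<open>Two linear maps agree on a form if they agree on the basis forms in its support;
  this is how almost every identity below is reduced to a computation on basis forms.\<close>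
lemma linear_eq_bf_supp:
  fixes f g :: "'n::finite form \<Rightarrow> 'b::real_vector"
  assumes "linear f" "linear g" "\<And>I. x $ I \<noteq> 0 \<Longrightarrow> f (bf I) = g (bf I)"
  shows "f x = g x"
proof -
  have "f x = (\<Sum>I\<in>UNIV. x $ I *\<^sub>R f (bf I))"
    by (subst form_expand) (simp add: linear_sum[OF assms(1)] linear_scale[OF assms(1)])
  also have "\<dots> = (\<Sum>I\<in>UNIV. x $ I *\<^sub>R g (bf I))"
    by (rule sum.cong) (auto simp: assms(3))
  also have "\<dots> = g x"
    by (subst (2) form_expand) (simp add: linear_sum[OF assms(2)] linear_scale[OF assms(2)])
  finally show ?thesis .
qed

lemma linear_eq_bf:
  fixes f g :: "'n::finite form \<Rightarrow> 'b::real_vector"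
  assumes "linear f" "linear g" "\<And>I. f (bf I) = g (bf I)"
  shows "f x = g x"
  using linear_eq_bf_supp[OF assms(1,2)] assms(3) by blast

lemma wedge_nth: "(a \<and>\<^sub>w b) $ K = (\<Sum>I\<in>Pow K. shuffle_sign I (K - I) * a $ I * b $ (K - I))"
  by (simp add: wedge_def)

lemma wedge_add_left: "(a + b) \<and>\<^sub>w c = a \<and>\<^sub>w c + b \<and>\<^sub>w c"
  by (simp add: vec_eq_iff wedge_nth algebra_simps sum.distrib)
lemma wedge_add_right: "c \<and>\<^sub>w (a + b) = c \<and>\<^sub>w a + c \<and>\<^sub>w b"
  by (simp add: vec_eq_iff wedge_nth algebra_simps sum.distrib)
lemma wedge_scale_left: "(r *\<^sub>R a) \<and>\<^sub>w c = r *\<^sub>R (a \<and>\<^sub>w c)"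
  by (simp add: vec_eq_iff wedge_nth algebra_simps sum_distrib_left)
lemma wedge_scale_right: "c \<and>\<^sub>w (r *\<^sub>R a) = r *\<^sub>R (c \<and>\<^sub>w a)"
  by (simp add: vec_eq_iff wedge_nth algebra_simps sum_distrib_left)

lemma linear_wedge_left: "linear (\<lambda>a. a \<and>\<^sub>w c)"
  by (intro linearI) (simp_all add: wedge_add_left wedge_scale_left)
lemma linear_wedge_right: "linear (\<lambda>a. c \<and>\<^sub>w a)"
  by (intro linearI) (simp_all add: wedge_add_right wedge_scale_right)

lemma wedge_zero_left [simp]: "0 \<and>\<^sub>w c = 0" by (simp add: vec_eq_iff wedge_nth)
lemma wedge_zero_right [simp]: "c \<and>\<^sub>w 0 = 0" by (simp add: vec_eq_iff wedge_nth)
lemma wedge_diff_left: "(a - b) \<and>\<^sub>w c = a \<and>\<^sub>w c - b \<and>\<^sub>w c"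
  by (simp add: vec_eq_iff wedge_nth algebra_simps sum_subtractf)
lemma wedge_diff_right: "c \<and>\<^sub>w (a - b) = c \<and>\<^sub>w a - c \<and>\<^sub>w b"
  by (simp add: vec_eq_iff wedge_nth algebra_simps sum_subtractf)
lemma wedge_neg_left: "(- a) \<and>\<^sub>w c = - (a \<and>\<^sub>w c)"
  by (simp add: vec_eq_iff wedge_nth algebra_simps sum_negf)
lemma wedge_neg_right: "c \<and>\<^sub>w (- a) = - (c \<and>\<^sub>w a)"
  by (simp add: vec_eq_iff wedge_nth algebra_simps sum_negf)
lemma wedge_sum_left: "(sum f S) \<and>\<^sub>w c = (\<Sum>x\<in>S. f x \<and>\<^sub>w c)"
  using linear_sum[OF linear_wedge_left] by simp
lemma wedge_sum_right: "c \<and>\<^sub>w (sum f S) = (\<Sum>x\<in>S. c \<and>\<^sub>w f x)"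
  using linear_sum[OF linear_wedge_right] by simp

lemmas wedge_lin = wedge_add_left wedge_add_right wedge_scale_left wedge_scale_right
  wedge_diff_left wedge_diff_right wedge_neg_left wedge_neg_right wedge_sum_left wedge_sum_right

lemma wedge_bf_right:
  "(a \<and>\<^sub>w bf J) $ K = (if J \<subseteq> K then shuffle_sign (K - J) J * a $ (K - J) else 0)"
proof -
  have "\<And>I. I \<in> Pow K \<Longrightarrow> shuffle_sign I (K - I) * a $ I * bf J $ (K - I)
     = (if I = K - J then (if J \<subseteq> K then shuffle_sign (K - J) J * a $ (K - J) else 0) else 0)"
    by (auto simp: bf_nth Diff_Diff_Int Int_absorb1)
  hence "(a \<and>\<^sub>w bf J) $ K = (\<Sum>I\<in>Pow K.
      if I = K - J then (if J \<subseteq> K then shuffle_sign (K - J) J * a $ (K - J) else 0) else 0)"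
    unfolding wedge_nth by (rule sum.cong[OF refl])
  thus ?thesis by (simp add: sum.delta)
qed

lemma wedge_bf_left:
  "(bf J \<and>\<^sub>w a) $ K = (if J \<subseteq> K then shuffle_sign J (K - J) * a $ (K - J) else 0)"
proof -
  have "\<And>I. I \<in> Pow K \<Longrightarrow> shuffle_sign I (K - I) * bf J $ I * a $ (K - I)
     = (if I = J then (if J \<subseteq> K then shuffle_sign J (K - J) * a $ (K - J) else 0) else 0)"
    by (auto simp: bf_nth)
  hence "(bf J \<and>\<^sub>w a) $ K = (\<Sum>I\<in>Pow K.
      if I = J then (if J \<subseteq> K then shuffle_sign J (K - J) * a $ (K - J) else 0) else 0)"
    unfolding wedge_nth by (rule sum.cong[OF refl])
  thus ?thesis by (simp add: sum.delta')
qed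

lemma wedge_bf: "bf I \<and>\<^sub>w bf J = (if I \<inter> J = {} then shuffle_sign I J *\<^sub>R bf (I \<union> J) else 0)"
proof (rule form_eq_coords)
  fix K
  show "(bf I \<and>\<^sub>w bf J) $ K = (if I \<inter> J = {} then shuffle_sign I J *\<^sub>R bf (I \<union> J) else 0) $ K"
    unfolding wedge_bf_left by (auto simp: bf_nth)
qed

lemma wedge_unit_left [simp]: "bf {} \<and>\<^sub>w a = a"
  by (rule form_eq_coords) (simp add: wedge_bf_left)
lemma wedge_unit_right [simp]: "a \<and>\<^sub>w bf {} = a"
  by (rule form_eq_coords) (simp add: wedge_bf_right)

lemma card_compl: "card (- (K::'n::finite set)) = CARD('n) - card K"
  by (simp add: Compl_eq_Diff_UNIV card_Diff_subset)

lemma wedge_assoc_bf: "(bf I \<and>\<^sub>w bf J) \<and>\<^sub>w bf K = bf I \<and>\<^sub>w (bf J \<and>\<^sub>w bf K)"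
proof (cases "I \<inter> J = {} \<and> I \<inter> K = {} \<and> J \<inter> K = {}")
  case True
  then show ?thesis
    by (simp add: wedge_bf wedge_scale_left wedge_scale_right Int_Un_distrib Int_Un_distrib2
        shuffle_sign_Un_left shuffle_sign_Un_right Un_assoc mult_ac)
next
  case False
  then show ?thesis
    by (auto simp: wedge_bf wedge_scale_left wedge_scale_right Int_Un_distrib Int_Un_distrib2)
qed

lemma wedge_assoc: "(a \<and>\<^sub>w b) \<and>\<^sub>w c = a \<and>\<^sub>w (b \<and>\<^sub>w c)"
proof -
  have on_bf2: "(bf I \<and>\<^sub>w bf J) \<and>\<^sub>w c = bf I \<and>\<^sub>w (bf J \<and>\<^sub>w c)" for I J
    by (rule linear_eq_bf[where f="\<lambda>c. (bf I \<and>\<^sub>w bf J) \<and>\<^sub>w c" and g="\<lambda>c. bf I \<and>\<^sub>w (bf J \<and>\<^sub>w c)"])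
      (auto intro!: linearI simp: wedge_lin wedge_assoc_bf)
  have on_bf1: "(bf I \<and>\<^sub>w b) \<and>\<^sub>w c = bf I \<and>\<^sub>w (b \<and>\<^sub>w c)" for I
    by (rule linear_eq_bf[where f="\<lambda>b. (bf I \<and>\<^sub>w b) \<and>\<^sub>w c" and g="\<lambda>b. bf I \<and>\<^sub>w (b \<and>\<^sub>w c)"])
      (auto intro!: linearI simp: wedge_lin on_bf2)
  show ?thesis
    by (rule linear_eq_bf[where f="\<lambda>a. (a \<and>\<^sub>w b) \<and>\<^sub>w c" and g="\<lambda>a. a \<and>\<^sub>w (b \<and>\<^sub>w c)"])
      (auto intro!: linearI simp: wedge_lin on_bf1)
qed

lemma Lam_supp: "a \<in> Lam k \<Longrightarrow> a $ I \<noteq> 0 \<Longrightarrow> int (card I) = k"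
  by (auto simp: Lam_def)

lemma Lam_supp_nat: "a \<in> Lam (int p) \<Longrightarrow> a $ I \<noteq> 0 \<Longrightarrow> card I = p"
  by (auto simp: Lam_def)

lemma bf_Lam: "bf I \<in> Lam (int (card I))"
  by (simp add: Lam_def bf_nth)

lemma bf_singleton_Lam1: "bf {i} \<in> Lam (int 1)"
  using bf_Lam[of "{i}"] by simp

lemma subspace_Lam: "subspace (Lam k)"
  by (auto simp: subspace_def Lam_def)

lemma Lam_negative: "k < 0 \<Longrightarrow> Lam k = ({0} :: 'n::finite form set)"
  by (auto simp: Lam_def vec_eq_iff)

lemma Lam_above_top: "k > int CARD('n) \<Longrightarrow> Lam k = ({0} :: 'n::finite form set)"
proof -
  assume k: "k > int CARD('n)"
  have "int (card I) \<noteq> k" for I :: "'n set"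
    using k card_mono[of "UNIV::'n set"]
    by (metis card_seteq finite_class.finite_UNIV linorder_not_le of_nat_le_iff subset_UNIV)
  thus ?thesis by (auto simp: Lam_def vec_eq_iff)
qed

lemma Lam0_span: "Lam 0 \<subseteq> span {bf {} :: 'n::finite form}"
proof
  fix x :: "'n form" assume x: "x \<in> Lam 0"
  have "x = x $ {} *\<^sub>R bf {}"
  proof (rule form_eq_coords)
    fix K :: "'n set"
    show "x $ K = (x $ {} *\<^sub>R bf {}) $ K"
      using Lam_supp[OF x, of K] by (cases "K = {}") (auto simp: bf_nth)
  qed
  thus "x \<in> span {bf {}}" by (metis span_base span_scale singletonI)
qed

lemma wedge_Lam: "a \<in> Lam p \<Longrightarrow> b \<in> Lam q \<Longrightarrow> a \<and>\<^sub>w b \<in> Lam (p + q)"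
proof -
  assume a: "a \<in> Lam p" and b: "b \<in> Lam q"
  show ?thesis unfolding Lam_def
  proof (intro CollectI allI impI)
    fix K :: "'a set" assume K: "int (card K) \<noteq> p + q"
    have "shuffle_sign I (K - I) * a $ I * b $ (K - I) = 0" if I: "I \<subseteq> K" for I
    proof (rule ccontr)
      assume "shuffle_sign I (K - I) * a $ I * b $ (K - I) \<noteq> 0"
      hence "int (card I) = p" "int (card (K - I)) = q"
        using Lam_supp[OF a] Lam_supp[OF b] by auto
      moreover have "card K = card I + card (K - I)"
        using I by (simp add: card_Diff_subset card_mono)
      ultimately show False using K by simp
    qed
    thus "(a \<and>\<^sub>w b) $ K = 0" unfolding wedge_nth by (intro sum.neutral) blast
  qed
qed

lemma wedge_comm_bf: "bf I \<and>\<^sub>w bf J = (-1) ^ (card I * card J) *\<^sub>R (bf J \<and>\<^sub>w bf I)"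
proof (cases "I \<inter> J = {}")
  case True
  then show ?thesis using shuffle_sign_commute[OF True]
    by (simp add: wedge_bf Int_commute Un_commute)
next
  case False
  then show ?thesis by (simp add: wedge_bf Int_commute)
qed

lemma wedge_comm:
  assumes a: "a \<in> Lam (int p)" and b: "b \<in> Lam (int q)"
  shows "a \<and>\<^sub>w b = (-1) ^ (p * q) *\<^sub>R (b \<and>\<^sub>w a)"
proof -
  have on_bf: "bf I \<and>\<^sub>w b = (-1) ^ (p * q) *\<^sub>R (b \<and>\<^sub>w bf I)" if I: "card I = p" for I
    by (rule linear_eq_bf_supp[where f="\<lambda>b. bf I \<and>\<^sub>w b" and g="\<lambda>b. (-1) ^ (p * q) *\<^sub>R (b \<and>\<^sub>w bf I)"])
      (auto intro!: linearI simp: wedge_lin algebra_simps wedge_comm_bf[of I] I Lam_supp_nat[OF b])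
  show ?thesis
    by (rule linear_eq_bf_supp[where f="\<lambda>a. a \<and>\<^sub>w b" and g="\<lambda>a. (-1) ^ (p * q) *\<^sub>R (b \<and>\<^sub>w a)"])
      (auto intro!: linearI simp: wedge_lin algebra_simps on_bf Lam_supp_nat[OF a])
qed

lemma wedge_singletons_anticomm: "bf {i} \<and>\<^sub>w (bf {k} \<and>\<^sub>w x) = - (bf {k} \<and>\<^sub>w (bf {i} \<and>\<^sub>w x))"
proof -
  have "bf {i} \<and>\<^sub>w bf {k} = - (bf {k} \<and>\<^sub>w bf {i})"
    using wedge_comm_bf[of "{i}" "{k}"] by simp
  thus ?thesis by (metis wedge_assoc wedge_neg_left)
qed

lemma bf_insert_min: "\<forall>x\<in>I. m < x \<Longrightarrow> bf (insert m I) = bf {m} \<and>\<^sub>w bf I"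
proof -
  assume below: "\<forall>x\<in>I. m < x"
  hence "m \<notin> I" by auto
  thus ?thesis using shuffle_sign_below[OF below] by (simp add: wedge_bf)
qed

lemma hodge_nth: "hodge a $ K = shuffle_sign (- K) K * a $ (- K)"
  by (simp add: hodge_def)

lemma linear_hodge: "linear hodge"
  by (intro linearI) (simp_all add: vec_eq_iff hodge_nth algebra_simps)

lemma hodge_bf: "hodge (bf M) = shuffle_sign M (- M) *\<^sub>R bf (- (M::'n::{finite,linorder} set))"
proof (rule form_eq_coords)
  fix K :: "'n set"
  show "hodge (bf M) $ K = (shuffle_sign M (- M) *\<^sub>R bf (- M)) $ K"
  proof (cases "K = - M")
    case True thus ?thesis by (simp add: hodge_nth bf_nth)
  next
    case False
    hence "- K \<noteq> M" by auto
    thus ?thesis using False by (simp add: hodge_nth bf_nth)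
  qed
qed

lemma hodge_Lam: "a \<in> Lam p \<Longrightarrow> hodge (a::'n::{finite,linorder} form) \<in> Lam (int CARD('n) - p)"
proof -
  assume a: "a \<in> Lam p"
  show ?thesis unfolding Lam_def
  proof (intro CollectI allI impI)
    fix K :: "'n set" assume K: "int (card K) \<noteq> int CARD('n) - p"
    have "card K \<le> CARD('n)" by (simp add: card_mono)
    hence "int (card (- K)) \<noteq> p" using K by (simp add: card_compl of_nat_diff)
    thus "hodge a $ K = 0" using Lam_supp[OF a] by (auto simp: hodge_nth)
  qed
qed

lemma hodge_hodge:
  assumes a: "a \<in> Lam (int p)"
  shows "hodge (hodge (a::'n::{finite,linorder} form)) = (-1) ^ (p * (CARD('n) - p)) *\<^sub>R a"
proof (rule form_eq_coords)
  fix K :: "'n set"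
  show "hodge (hodge a) $ K = ((-1) ^ (p * (CARD('n) - p)) *\<^sub>R a) $ K"
  proof (cases "a $ K = 0")
    case True then show ?thesis by (simp add: hodge_nth)
  next
    case False
    hence "card K = p" using Lam_supp_nat[OF a] by blast
    moreover have "shuffle_sign (- K) K * shuffle_sign K (- K) = (-1) ^ (card K * card (- K))"
      by (subst mult.commute) (rule shuffle_sign_swap, simp)
    ultimately show ?thesis by (simp add: hodge_nth card_compl mult.assoc)
  qed
qed

lemma hodge_eq_zero:
  assumes "hodge a = 0" shows "a = 0"
proof (rule form_eq_coords)
  fix K
  have "hodge a $ (- K) = 0" using assms by simp
  thus "a $ K = 0 $ K" by (simp add: hodge_nth)
qed

lemma hodge_wedge_adjoint_bf:
  fixes A B I :: "'n::{finite,linorder} set"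
  assumes cA: "card A = l" and cB: "card B = m"
  shows "bf I \<bullet> hodge (bf A \<and>\<^sub>w bf B) = (-1) ^ (l * m) * ((bf A \<and>\<^sub>w bf I) \<bullet> hodge (bf B))"
proof (cases "A \<inter> B = {} \<and> I = - (A \<union> B)")
  case True
  hence h: "A \<inter> I = {}" "A \<union> I = - B" "A \<inter> B = {}" "I = - (A \<union> B)" by auto
  have L: "bf I \<bullet> hodge (bf A \<and>\<^sub>w bf B) = shuffle_sign A B * shuffle_sign (A \<union> B) I"
    using h by (simp add: wedge_bf hodge_bf inner_bf_left linear_scale[OF linear_hodge] bf_nth)
  have R: "(bf A \<and>\<^sub>w bf I) \<bullet> hodge (bf B) = shuffle_sign A I * shuffle_sign B (- B)"
    using h by (simp add: wedge_bf hodge_bf inner_bf_left bf_nth)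
  have s1: "shuffle_sign (A \<union> B) I = shuffle_sign A I * shuffle_sign B I"
    using h(3) by (rule shuffle_sign_Un_left)
  have s2: "shuffle_sign B (- B) = shuffle_sign B A * shuffle_sign B I"
    unfolding h(2)[symmetric] using h(1) by (rule shuffle_sign_Un_right)
  have s3: "shuffle_sign A B = (-1) ^ (l * m) * shuffle_sign B A"
    using shuffle_sign_commute[OF h(3)] cA cB by simp
  show ?thesis unfolding L R s1 s2 s3 by (simp add: mult_ac)
next
  case False
  have L: "bf I \<bullet> hodge (bf A \<and>\<^sub>w bf B) = 0"
  proof (cases "A \<inter> B = {}")
    case True
    hence "I \<noteq> - (A \<union> B)" using False by auto
    thus ?thesis using True
      by (simp add: wedge_bf hodge_bf inner_bf_left linear_scale[OF linear_hodge] bf_nth)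
  qed (simp add: wedge_bf linear_0[OF linear_hodge])
  have R: "(bf A \<and>\<^sub>w bf I) \<bullet> hodge (bf B) = 0"
  proof (cases "A \<inter> I = {}")
    case True
    hence "A \<union> I \<noteq> - B" using False by blast
    thus ?thesis using True by (simp add: wedge_bf hodge_bf inner_bf_left bf_nth)
  qed (simp add: wedge_bf)
  show ?thesis using L R by simp
qed

lemma hodge_wedge_adjoint:
  fixes p u x :: "'n::{finite,linorder} form"
  assumes p: "p \<in> Lam (int l)" and u: "u \<in> Lam (int m)"
  shows "x \<bullet> hodge (p \<and>\<^sub>w u) = (-1) ^ (l * m) * ((p \<and>\<^sub>w x) \<bullet> hodge u)"
proof -
  have lh: "hodge (a + b) = hodge a + hodge b" "hodge (r *\<^sub>R a) = r *\<^sub>R hodge a" for a b r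
    using linear_add[OF linear_hodge] linear_scale[OF linear_hodge] by auto
  have on_bf2: "x \<bullet> hodge (bf A \<and>\<^sub>w bf B) = (-1) ^ (l * m) * ((bf A \<and>\<^sub>w x) \<bullet> hodge (bf B))"
    if "card A = l" "card B = m" for A B
    by (rule linear_eq_bf[where f="\<lambda>x. x \<bullet> hodge (bf A \<and>\<^sub>w bf B)"
          and g="\<lambda>x. (-1) ^ (l * m) * ((bf A \<and>\<^sub>w x) \<bullet> hodge (bf B))"])
      (auto intro!: linearI simp: inner_add_left wedge_lin algebra_simps hodge_wedge_adjoint_bf[OF that])
  have on_bf1: "x \<bullet> hodge (bf A \<and>\<^sub>w u) = (-1) ^ (l * m) * ((bf A \<and>\<^sub>w x) \<bullet> hodge u)"
    if "card A = l" for A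
    by (rule linear_eq_bf_supp[where f="\<lambda>u. x \<bullet> hodge (bf A \<and>\<^sub>w u)"
          and g="\<lambda>u. (-1) ^ (l * m) * ((bf A \<and>\<^sub>w x) \<bullet> hodge u)"])
      (auto intro!: linearI simp: inner_add_right wedge_lin lh algebra_simps on_bf2[OF that]
        Lam_supp_nat[OF u])
  show ?thesis
    by (rule linear_eq_bf_supp[where f="\<lambda>p. x \<bullet> hodge (p \<and>\<^sub>w u)"
          and g="\<lambda>p. (-1) ^ (l * m) * ((p \<and>\<^sub>w x) \<bullet> hodge u)"])
      (auto intro!: linearI simp: inner_add_left inner_add_right wedge_lin lh algebra_simps on_bf1
        Lam_supp_nat[OF p])
qed

lemma interior_nth:
  "interior j a $ K = (if j \<in> K then 0 else shuffle_sign {j} K * a $ (insert j K))"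
  by (simp add: interior_def)

lemma linear_interior: "linear (interior j)"
  by (intro linearI) (simp_all add: vec_eq_iff interior_nth algebra_simps)

lemma interior_zero [simp]: "interior j 0 = 0"
  by (simp add: vec_eq_iff interior_nth)

lemma interior_bf:
  "interior j (bf M) = (if j \<in> M then shuffle_sign {j} (M - {j}) *\<^sub>R bf (M - {j}) else 0)"
proof (rule form_eq_coords)
  fix K
  show "interior j (bf M) $ K = (if j \<in> M then shuffle_sign {j} (M - {j}) *\<^sub>R bf (M - {j}) else 0) $ K"
    by (auto simp: interior_nth bf_nth)
qed

lemma interior_unit [simp]: "interior j (bf {}) = 0"
  by (simp add: interior_bf)

lemma interior_singleton: "interior j (bf {i}) = (if i = j then bf {} else 0)"
  by (simp add: interior_bf)

lemma interior_Lam: "(a::'n::{finite,linorder} form) \<in> Lam p \<Longrightarrow> interior j a \<in> Lam (p - 1)"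
proof -
  assume a: "a \<in> Lam p"
  show ?thesis unfolding Lam_def
  proof (intro CollectI allI impI)
    fix K :: "'n set" assume K: "int (card K) \<noteq> p - 1"
    show "interior j a $ K = 0"
    proof (cases "j \<in> K")
      case False
      hence "int (card (insert j K)) \<noteq> p" using K by simp
      hence "a $ (insert j K) = 0" using Lam_supp[OF a] by blast
      thus ?thesis by (simp add: interior_nth)
    qed (simp add: interior_nth)
  qed
qed

lemma shuffle_sign_exchange:
  fixes i j :: "'n::{finite,linorder}"
  assumes "i \<noteq> j" "i \<notin> M" "j \<notin> M"
  shows "shuffle_sign {i} (insert j M) * shuffle_sign {j} (insert i M)
       = - (shuffle_sign {i} M * shuffle_sign {j} M)"
proof -
  have "shuffle_sign {i} (insert j M) = shuffle_sign {i} M * shuffle_sign {i} {j}"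
    using shuffle_sign_Un_right[of M "{j}" "{i}"] assms by simp
  moreover have "shuffle_sign {j} (insert i M) = shuffle_sign {j} M * shuffle_sign {j} {i}"
    using shuffle_sign_Un_right[of M "{i}" "{j}"] assms by simp
  ultimately show ?thesis
    using shuffle_sign_singletons[OF assms(1)]
    by (metis (no_types, lifting) mult.commute mult.left_commute mult_minus1_right)
qed

lemma interior_wedge_singleton_bf:
  "interior j (bf {i} \<and>\<^sub>w bf K) = (if i = j then bf K else 0) - bf {i} \<and>\<^sub>w interior j (bf K)"
proof (cases "i = j")
  case True
  show ?thesis
  proof (cases "j \<in> K")
    case jK: True
    then show ?thesis using True
      by (simp add: wedge_bf interior_bf wedge_scale_right insert_absorb linear_0[OF linear_interior])
  next
    case jK: False
    have e: "insert j K - {j} = K" using jK by auto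
    show ?thesis using True jK
      by (simp add: wedge_bf interior_bf linear_scale[OF linear_interior] e)
  qed
next
  case ij: False
  show ?thesis
  proof (cases "j \<in> K \<and> i \<notin> K")
    case True
    define M where "M = K - {j}"
    have K: "K = insert j M" "j \<notin> M" "i \<notin> M" and "K - {j} = M"
      using True by (auto simp: M_def)
    have e: "insert i K - {j} = insert i M" using K ij by auto
    have w: "bf {i} \<and>\<^sub>w bf K = shuffle_sign {i} K *\<^sub>R bf (insert i K)"
      using True by (simp add: wedge_bf)
    have "interior j (bf (insert i K)) = shuffle_sign {j} (insert i M) *\<^sub>R bf (insert i M)"
      using True by (simp add: interior_bf e)
    hence "interior j (bf {i} \<and>\<^sub>w bf K)
        = (shuffle_sign {i} (insert j M) * shuffle_sign {j} (insert i M)) *\<^sub>R bf (insert i M)"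
      by (simp add: w linear_scale[OF linear_interior] flip: K(1))
    moreover have "bf {i} \<and>\<^sub>w interior j (bf K) = (shuffle_sign {i} M * shuffle_sign {j} M) *\<^sub>R bf (insert i M)"
      using True K(3) \<open>K - {j} = M\<close> by (simp add: interior_bf wedge_scale_right wedge_bf)
    ultimately show ?thesis using ij shuffle_sign_exchange[OF ij K(3,2)] by simp
  next
    case False
    show ?thesis
    proof (cases "j \<in> K")
      case True
      hence "i \<in> K" using False by auto
      then show ?thesis using True ij by (simp add: wedge_bf interior_bf wedge_scale_right)
    next
      case jK: False
      then show ?thesis using ij by (simp add: wedge_bf interior_bf linear_scale[OF linear_interior])
    qed
  qed
qed

lemma interior_wedge_singleton:
  "interior j (bf {i} \<and>\<^sub>w b) = (if i = j then b else 0) - bf {i} \<and>\<^sub>w interior j b"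
  by (rule linear_eq_bf[where f="\<lambda>b. interior j (bf {i} \<and>\<^sub>w b)"
        and g="\<lambda>b. (if i = j then b else 0) - bf {i} \<and>\<^sub>w interior j b"])
    (auto intro!: linearI simp: wedge_lin interior_wedge_singleton_bf linear_add[OF linear_interior]
      linear_scale[OF linear_interior] algebra_simps)

lemma interior_adjoint: "(bf {i} \<and>\<^sub>w a) \<bullet> b = a \<bullet> interior i b"
proof (rule linear_eq_bf[where f="\<lambda>b. (bf {i} \<and>\<^sub>w a) \<bullet> b" and g="\<lambda>b. a \<bullet> interior i b"])
  show "linear (\<lambda>b. (bf {i} \<and>\<^sub>w a) \<bullet> b)"
    by (intro linearI) (simp_all add: inner_add_right)
  show "linear (\<lambda>b. a \<bullet> interior i b)"
    by (intro linearI) (simp_all add: inner_add_right linear_add[OF linear_interior]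
        linear_scale[OF linear_interior])
  fix B
  show "(bf {i} \<and>\<^sub>w a) \<bullet> bf B = a \<bullet> interior i (bf B)"
    by (simp add: inner_bf_right wedge_bf_left interior_bf)
qed

lemma interior_adjoint_right: "a \<bullet> (bf {i} \<and>\<^sub>w b) = interior i a \<bullet> b"
  by (metis interior_adjoint inner_commute)

lemma interior_anticomm: "interior i (interior b x) = - interior b (interior i x)"
proof (rule form_eq_coords)
  fix K
  have "interior i (interior b x) $ K = (bf {b} \<and>\<^sub>w (bf {i} \<and>\<^sub>w bf K)) \<bullet> x"
    by (simp add: inner_bf_left interior_adjoint)
  also have "\<dots> = - ((bf {i} \<and>\<^sub>w (bf {b} \<and>\<^sub>w bf K)) \<bullet> x)"
    by (simp add: wedge_singletons_anticomm[of b i])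
  also have "\<dots> = (- interior b (interior i x)) $ K"
    by (simp add: inner_bf_left interior_adjoint)
  finally show "interior i (interior b x) $ K = (- interior b (interior i x)) $ K" .
qed

lemma derivation_on_basis:
  fixes D :: "'n::{finite,linorder} form \<Rightarrow> 'n form"
  assumes gen: "\<And>i b. D (bf {i} \<and>\<^sub>w b) = D (bf {i}) \<and>\<^sub>w b + s *\<^sub>R (bf {i} \<and>\<^sub>w D b)"
    and D_unit: "D (bf {}) = 0"
  shows "D (bf I \<and>\<^sub>w b) = D (bf I) \<and>\<^sub>w b + s ^ card I *\<^sub>R (bf I \<and>\<^sub>w D b)"
proof -
  have "finite I" by simp
  thus ?thesis
  proof (induction I arbitrary: b rule: finite_linorder_min_induct)
    case empty then show ?case by (simp add: D_unit)
  next
    case (insert m I)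
    have mI: "m \<notin> I" using insert.hyps by auto
    have e: "bf (insert m I) = bf {m} \<and>\<^sub>w bf I" using bf_insert_min insert.hyps by blast
    have "D (bf (insert m I) \<and>\<^sub>w b) = D (bf {m} \<and>\<^sub>w (bf I \<and>\<^sub>w b))" by (simp add: e wedge_assoc)
    also have "\<dots> = D (bf {m}) \<and>\<^sub>w (bf I \<and>\<^sub>w b)
        + s *\<^sub>R (bf {m} \<and>\<^sub>w (D (bf I) \<and>\<^sub>w b + s ^ card I *\<^sub>R (bf I \<and>\<^sub>w D b)))"
      by (simp add: gen insert.IH)
    also have "\<dots> = D (bf (insert m I)) \<and>\<^sub>w b + s ^ card (insert m I) *\<^sub>R (bf (insert m I) \<and>\<^sub>w D b)"
      by (simp add: e gen wedge_lin wedge_assoc mI algebra_simps)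
    finally show ?case .
  qed
qed

lemma derivation_wedge:
  fixes D :: "'n::{finite,linorder} form \<Rightarrow> 'n form"
  assumes lin: "linear D"
    and gen: "\<And>i b. D (bf {i} \<and>\<^sub>w b) = D (bf {i}) \<and>\<^sub>w b + s *\<^sub>R (bf {i} \<and>\<^sub>w D b)"
    and D_unit: "D (bf {}) = 0"
    and a: "a \<in> Lam (int p)"
  shows "D (a \<and>\<^sub>w b) = D a \<and>\<^sub>w b + s ^ p *\<^sub>R (a \<and>\<^sub>w D b)"
  by (rule linear_eq_bf_supp[where f="\<lambda>a. D (a \<and>\<^sub>w b)" and g="\<lambda>a. D a \<and>\<^sub>w b + s ^ p *\<^sub>R (a \<and>\<^sub>w D b)"])
    (auto intro!: linearI simp: wedge_lin linear_add[OF lin] linear_scale[OF lin] algebra_simps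
      derivation_on_basis[OF gen D_unit] Lam_supp_nat[OF a])

lemma even_derivation_wedge:
  fixes D :: "'n::{finite,linorder} form \<Rightarrow> 'n form"
  assumes lin: "linear D"
    and gen: "\<And>i b. D (bf {i} \<and>\<^sub>w b) = D (bf {i}) \<and>\<^sub>w b + bf {i} \<and>\<^sub>w D b"
    and D_unit: "D (bf {}) = 0"
  shows "D (a \<and>\<^sub>w b) = D a \<and>\<^sub>w b + a \<and>\<^sub>w D b"
proof -
  have gen': "\<And>i b. D (bf {i} \<and>\<^sub>w b) = D (bf {i}) \<and>\<^sub>w b + (1::real) *\<^sub>R (bf {i} \<and>\<^sub>w D b)"
    using gen by simp
  show ?thesis
    by (rule linear_eq_bf[where f="\<lambda>a. D (a \<and>\<^sub>w b)" and g="\<lambda>a. D a \<and>\<^sub>w b + a \<and>\<^sub>w D b"])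
      (auto intro!: linearI simp: wedge_lin linear_add[OF lin] linear_scale[OF lin] algebra_simps
        derivation_on_basis[OF gen' D_unit])
qed

lemma derivation_vanishes:
  fixes D :: "'n::{finite,linorder} form \<Rightarrow> 'n form"
  assumes lin: "linear D"
    and gen: "\<And>i b. D (bf {i} \<and>\<^sub>w b) = D (bf {i}) \<and>\<^sub>w b + s *\<^sub>R (bf {i} \<and>\<^sub>w D b)"
    and D_unit: "D (bf {}) = 0"
    and D_gen: "\<And>i. D (bf {i}) = 0"
  shows "D x = 0"
proof -
  have on_bf: "D (bf I) = 0" for I
  proof -
    have "finite I" by simp
    thus ?thesis
    proof (induction I rule: finite_linorder_min_induct)
      case empty then show ?case by (simp add: D_unit)
    next
      case (insert m I)
      have "bf (insert m I) = bf {m} \<and>\<^sub>w bf I" using bf_insert_min insert.hyps by blast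
      then show ?case by (simp add: gen D_gen insert.IH)
    qed
  qed
  show ?thesis
    by (rule linear_eq_bf[where f=D and g="\<lambda>x. 0"]) (auto intro!: linearI simp: lin on_bf)
qed

lemma interior_wedge:
  assumes p: "p \<in> Lam (int l)"
  shows "interior i (p \<and>\<^sub>w w) = interior i p \<and>\<^sub>w w + (-1) ^ l *\<^sub>R (p \<and>\<^sub>w interior i w)"
proof (rule derivation_wedge[where D="interior i" and s="-1", OF linear_interior _ _ p])
  fix k b
  show "interior i (bf {k} \<and>\<^sub>w b) = interior i (bf {k}) \<and>\<^sub>w b + (-1) *\<^sub>R (bf {k} \<and>\<^sub>w interior i b)"
    by (simp add: interior_wedge_singleton interior_singleton)
qed simp

definition elem_der :: "'n::{finite,linorder} \<Rightarrow> 'n \<Rightarrow> 'n form \<Rightarrow> 'n form" where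
  "elem_der i j w = bf {i} \<and>\<^sub>w interior j w"

lemma linear_elem_der: "linear (elem_der i j)"
  by (intro linearI) (simp_all add: elem_der_def linear_add[OF linear_interior]
      linear_scale[OF linear_interior] wedge_lin)

lemma elem_der_wedge: "elem_der i j (a \<and>\<^sub>w b) = elem_der i j a \<and>\<^sub>w b + a \<and>\<^sub>w elem_der i j b"
proof (rule even_derivation_wedge[OF linear_elem_der])
  fix k b
  show "elem_der i j (bf {k} \<and>\<^sub>w b) = elem_der i j (bf {k}) \<and>\<^sub>w b + bf {k} \<and>\<^sub>w elem_der i j b"
    by (simp add: elem_der_def interior_wedge_singleton interior_singleton wedge_lin
        wedge_singletons_anticomm[of i k])
qed (simp add: elem_der_def)

lemma ad_action_elem_der:
  "ad_action c x w = (\<Sum>i\<in>UNIV. \<Sum>j\<in>UNIV. (bracket c x (axis j 1) $ i) *\<^sub>R elem_der i j w)"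
  by (simp add: ad_action_def elem_der_def)

lemma linear_ad_action: "linear (ad_action c x)"
  by (intro linearI) (simp_all add: ad_action_elem_der linear_add[OF linear_elem_der]
      linear_scale[OF linear_elem_der] scaleR_add_right sum.distrib scaleR_sum_right mult.commute)

lemma ad_action_unit [simp]: "ad_action c x (bf {}) = 0"
  by (simp add: ad_action_def)

lemma ad_action_wedge: "ad_action c x (a \<and>\<^sub>w b) = ad_action c x a \<and>\<^sub>w b + a \<and>\<^sub>w ad_action c x b"
  by (simp add: ad_action_elem_der elem_der_wedge wedge_lin scaleR_add_right sum.distrib)

lemma sum_axis: "(\<Sum>a\<in>UNIV. (axis m (1::real)) $ a * g a) = g m"
proof -
  have "\<And>a. axis m (1::real) $ a * g a = (if a = m then g m else 0)" by (simp add: axis_def)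
  thus ?thesis by simp
qed

lemma bracket_axis_right: "bracket c y (axis j 1) $ i = (\<Sum>a\<in>UNIV. y $ a * c a j i)"
proof -
  have "(\<Sum>b\<in>UNIV. y $ a * axis j 1 $ b * c a b i) = y $ a * c a j i" for a
  proof -
    have "(\<Sum>b\<in>UNIV. y $ a * axis j 1 $ b * c a b i) = (\<Sum>b\<in>UNIV. axis j (1::real) $ b * (y $ a * c a b i))"
      by (rule sum.cong) (simp_all add: mult_ac)
    also have "\<dots> = y $ a * c a j i" by (rule sum_axis)
    finally show ?thesis .
  qed
  thus ?thesis by (simp add: bracket_def)
qed

lemma bracket_axis: "bracket c (axis m 1) (axis j 1) $ i = c m j i"
  by (simp add: bracket_axis_right sum_axis)

abbreviation ad_e :: "('n::{finite,linorder} \<Rightarrow> 'n \<Rightarrow> 'n \<Rightarrow> real) \<Rightarrow> 'n \<Rightarrow> 'n form \<Rightarrow> 'n form" where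
  "ad_e c m \<equiv> ad_action c (axis m 1)"

lemma ad_e_expand: "ad_e c m w = (\<Sum>i\<in>UNIV. \<Sum>j\<in>UNIV. c m j i *\<^sub>R (bf {i} \<and>\<^sub>w interior j w))"
  by (simp add: ad_action_def bracket_axis)

lemma ad_e_singleton: "ad_e c m (bf {j}) = (\<Sum>i\<in>UNIV. c m j i *\<^sub>R bf {i})"
proof -
  have "\<And>i j'. c m j' i *\<^sub>R (bf {i} \<and>\<^sub>w interior j' (bf {j})) = (if j' = j then c m j i *\<^sub>R bf {i} else 0)"
    by (simp add: interior_singleton)
  thus ?thesis by (simp add: ad_e_expand)
qed

subsection \<open>Structure constants of a compact Lie algebra\<close>

text \<open>Total antisymmetry of the structure constants, which holds exactly when the basis is
  orthonormal for an ad-invariant inner product.\<close>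
definition totally_skew :: "('n \<Rightarrow> 'n \<Rightarrow> 'n \<Rightarrow> real) \<Rightarrow> bool" where
  "totally_skew c \<longleftrightarrow> (\<forall>i j k. c i j k = - c j i k) \<and> (\<forall>i j k. c i j k = - c i k j)"

lemma totally_skewD:
  assumes "totally_skew c"
  shows "c i j k = - c j i k" and "c i j k = - c i k j"
  using assms unfolding totally_skew_def by blast+

lemma sum_rotate3:
  "(\<Sum>a\<in>UNIV. \<Sum>b\<in>UNIV. \<Sum>c\<in>UNIV. f a b c) = (\<Sum>b\<in>UNIV. \<Sum>c\<in>UNIV. \<Sum>a\<in>UNIV. (f a b c :: real))"
proof -
  have "(\<Sum>a\<in>UNIV. \<Sum>b\<in>UNIV. \<Sum>c\<in>UNIV. f a b c) = (\<Sum>b\<in>UNIV. \<Sum>a\<in>UNIV. \<Sum>c\<in>UNIV. f a b c)"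
    by (rule sum.swap)
  also have "\<dots> = (\<Sum>b\<in>UNIV. \<Sum>c\<in>UNIV. \<Sum>a\<in>UNIV. f a b c)"
    by (rule sum.cong[OF refl], rule sum.swap)
  finally show ?thesis .
qed

lemma structure_const_antisym:
  assumes "is_lie_algebra c"
  shows "c i j k = - c j i k"
  using assms unfolding is_lie_algebra_def by blast

text \<open>The Jacobi identity in the form ad[e_i,e_j] = [ad e_i, ad e_j].\<close>
lemma structure_const_jacobi:
  fixes c :: "'n::finite \<Rightarrow> 'n \<Rightarrow> 'n \<Rightarrow> real"
  assumes lie: "is_lie_algebra c"
  shows "(\<Sum>m\<in>UNIV. c i j m * c m q p) = (\<Sum>r\<in>UNIV. c i r p * c j q r - c j r p * c i q r)"
proof -
  have J: "(\<Sum>m\<in>UNIV. c i j m * c m q p + c j q m * c m i p + c q i m * c m j p) = 0"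
    using lie unfolding is_lie_algebra_def by blast
  have "(\<Sum>m\<in>UNIV. c i j m * c m q p)
      = - (\<Sum>m\<in>UNIV. c j q m * c m i p) - (\<Sum>m\<in>UNIV. c q i m * c m j p)"
    using J unfolding sum.distrib by linarith
  also have "(\<Sum>m\<in>UNIV. c j q m * c m i p) = - (\<Sum>m\<in>UNIV. c i m p * c j q m)"
  proof -
    have t: "c j q m * c m i p = - (c i m p * c j q m)" for m
      using structure_const_antisym[OF lie, of m i p] by simp
    show ?thesis by (simp only: t sum_negf)
  qed
  also have "(\<Sum>m\<in>UNIV. c q i m * c m j p) = (\<Sum>m\<in>UNIV. c j m p * c i q m)"
  proof -
    have t: "c q i m * c m j p = c j m p * c i q m" for m
      using structure_const_antisym[OF lie, of q i m] structure_const_antisym[OF lie, of m j p] by simp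
    show ?thesis by (simp only: t)
  qed
  finally show ?thesis by (simp add: sum_subtractf)
qed

text \<open>Invariance of the Killing form: with B(e_i,e_j) = -\<delta>_ij, both
  \<Sum>_m c_ijm B(e_m,e_k) and \<Sum>_m c_ikm B(e_j,e_m) are expressed by the same two cubic
  sums T1, T2 with opposite signs, so c_ijk = -c_ikj.\<close>
lemma structure_const_antisym23:
  fixes c :: "'n::finite \<Rightarrow> 'n \<Rightarrow> 'n \<Rightarrow> real"
  assumes lie: "is_lie_algebra c" and kill: "\<And>i j. killing c i j = - (if i = j then 1 else 0)"
  shows "c i j k = - c i k j"
proof -
  define T1 where "T1 = (\<Sum>p\<in>UNIV. \<Sum>q\<in>UNIV. \<Sum>r\<in>UNIV. c i r p * c j q r * c k p q)"
  define T2 where "T2 = (\<Sum>p\<in>UNIV. \<Sum>q\<in>UNIV. \<Sum>r\<in>UNIV. c j r p * c i q r * c k p q)"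
  have first: "(\<Sum>m\<in>UNIV. c i j m * killing c m k) = T1 - T2"
  proof -
    have "(\<Sum>m\<in>UNIV. c i j m * killing c m k)
        = (\<Sum>m\<in>UNIV. \<Sum>p\<in>UNIV. \<Sum>q\<in>UNIV. c i j m * c m q p * c k p q)"
      by (simp add: killing_def sum_distrib_left mult.assoc)
    also have "\<dots> = (\<Sum>p\<in>UNIV. \<Sum>q\<in>UNIV. \<Sum>m\<in>UNIV. c i j m * c m q p * c k p q)"
      by (rule sum_rotate3)
    also have "\<dots> = (\<Sum>p\<in>UNIV. \<Sum>q\<in>UNIV. (\<Sum>m\<in>UNIV. c i j m * c m q p) * c k p q)"
      by (simp add: sum_distrib_right)
    also have "\<dots> = (\<Sum>p\<in>UNIV. \<Sum>q\<in>UNIV. (\<Sum>r\<in>UNIV. c i r p * c j q r - c j r p * c i q r) * c k p q)"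
      by (simp add: structure_const_jacobi[OF lie])
    also have "\<dots> = T1 - T2"
      by (simp add: T1_def T2_def sum_distrib_right sum_subtractf left_diff_distrib)
    finally show ?thesis .
  qed
  have second: "(\<Sum>m\<in>UNIV. c i k m * killing c j m) = T2 - T1"
  proof -
    have "(\<Sum>m\<in>UNIV. c i k m * killing c j m)
        = (\<Sum>m\<in>UNIV. \<Sum>p\<in>UNIV. \<Sum>q\<in>UNIV. c i k m * c m p q * c j q p)"
      by (simp add: killing_def sum_distrib_left mult_ac)
    also have "\<dots> = (\<Sum>p\<in>UNIV. \<Sum>q\<in>UNIV. \<Sum>m\<in>UNIV. c i k m * c m p q * c j q p)"
      by (rule sum_rotate3)
    also have "\<dots> = (\<Sum>p\<in>UNIV. \<Sum>q\<in>UNIV. (\<Sum>m\<in>UNIV. c i k m * c m p q) * c j q p)"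
      by (simp add: sum_distrib_right)
    also have "\<dots> = (\<Sum>p\<in>UNIV. \<Sum>q\<in>UNIV. (\<Sum>r\<in>UNIV. c i r q * c k p r - c k r q * c i p r) * c j q p)"
      by (simp add: structure_const_jacobi[OF lie])
    also have "\<dots> = (\<Sum>p\<in>UNIV. \<Sum>q\<in>UNIV. \<Sum>r\<in>UNIV. c i r q * c k p r * c j q p)
                 - (\<Sum>p\<in>UNIV. \<Sum>q\<in>UNIV. \<Sum>r\<in>UNIV. c k r q * c i p r * c j q p)"
      by (simp add: sum_distrib_right sum_subtractf left_diff_distrib)
    also have "(\<Sum>p\<in>UNIV. \<Sum>q\<in>UNIV. \<Sum>r\<in>UNIV. c i r q * c k p r * c j q p) = T2"
    proof -
      have "(\<Sum>p\<in>UNIV. \<Sum>q\<in>UNIV. \<Sum>r\<in>UNIV. c i r q * c k p r * c j q p)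
          = (\<Sum>p\<in>UNIV. \<Sum>r\<in>UNIV. \<Sum>q\<in>UNIV. c i r q * c k p r * c j q p)"
        by (rule sum.cong[OF refl], rule sum.swap)
      thus ?thesis by (simp add: T2_def mult_ac)
    qed
    also have "(\<Sum>p\<in>UNIV. \<Sum>q\<in>UNIV. \<Sum>r\<in>UNIV. c k r q * c i p r * c j q p) = T1"
    proof -
      have "(\<Sum>p\<in>UNIV. \<Sum>q\<in>UNIV. \<Sum>r\<in>UNIV. c k r q * c i p r * c j q p)
          = (\<Sum>q\<in>UNIV. \<Sum>r\<in>UNIV. \<Sum>p\<in>UNIV. c k r q * c i p r * c j q p)"
        by (rule sum_rotate3)
      also have "\<dots> = (\<Sum>r\<in>UNIV. \<Sum>q\<in>UNIV. \<Sum>p\<in>UNIV. c k r q * c i p r * c j q p)"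
        by (rule sum.swap)
      finally show ?thesis by (simp add: T1_def mult_ac)
    qed
    finally show ?thesis .
  qed
  have "(\<Sum>m\<in>UNIV. c i j m * killing c m k) = - c i j k"
    by (simp add: kill if_distrib cong: if_cong)
  moreover have "(\<Sum>m\<in>UNIV. c i k m * killing c j m) = - c i k j"
    by (simp add: kill if_distrib cong: if_cong)
  ultimately show ?thesis using first second by linarith
qed

lemma compact_simple_totally_skew: "compact_simple_orthonormal c \<Longrightarrow> totally_skew c"
  unfolding totally_skew_def compact_simple_orthonormal_def
  using structure_const_antisym structure_const_antisym23 by blast

lemma structure_const_diag:
  assumes "totally_skew c" shows "c m b m = 0"
  using totally_skewD[OF assms, of m m b] totally_skewD[OF assms, of m b m] by simp

lemma ad_e_skew:
  assumes skew: "totally_skew c"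
  shows "(ad_e c m a) \<bullet> b = - (a \<bullet> ad_e c m b)"
proof -
  have l: "(ad_e c m a) \<bullet> b = (\<Sum>i\<in>UNIV. \<Sum>j\<in>UNIV. c m j i * (interior j a \<bullet> interior i b))"
    by (simp add: ad_e_expand inner_sum_left interior_adjoint)
  have "a \<bullet> ad_e c m b = (\<Sum>i\<in>UNIV. \<Sum>j\<in>UNIV. c m j i * (interior i a \<bullet> interior j b))"
    by (simp add: ad_e_expand inner_sum_right interior_adjoint_right)
  also have "\<dots> = (\<Sum>j\<in>UNIV. \<Sum>i\<in>UNIV. c m j i * (interior i a \<bullet> interior j b))"
    by (rule sum.swap)
  also have "\<dots> = (\<Sum>i\<in>UNIV. \<Sum>j\<in>UNIV. - (c m j i * (interior j a \<bullet> interior i b)))"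
  proof -
    have t: "c m i j * (interior j a \<bullet> interior i b) = - (c m j i * (interior j a \<bullet> interior i b))" for i j
      using totally_skewD(2)[OF skew, of m i j] by simp
    show ?thesis by (simp only: t)
  qed
  finally show ?thesis using l by (simp add: sum_negf)
qed

subsection \<open>Explicit formulas for d and \<delta>\<close>

definition d_formula :: "('n::{finite,linorder} \<Rightarrow> 'n \<Rightarrow> 'n \<Rightarrow> real) \<Rightarrow> 'n form \<Rightarrow> 'n form" where
  "d_formula c w = (- 1/2) *\<^sub>R (\<Sum>i\<in>UNIV. bf {i} \<and>\<^sub>w ad_e c i w)"

lemma linear_d_formula: "linear (d_formula c)"
  by (intro linearI) (simp_all add: d_formula_def linear_add[OF linear_ad_action]
      linear_scale[OF linear_ad_action] wedge_lin sum.distrib scaleR_sum_right scaleR_add_right)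

lemma d_formula_wedge_singleton:
  "d_formula c (bf {k} \<and>\<^sub>w b) = d_formula c (bf {k}) \<and>\<^sub>w b - bf {k} \<and>\<^sub>w d_formula c b"
proof -
  have "(\<Sum>i\<in>UNIV. bf {i} \<and>\<^sub>w ad_e c i (bf {k} \<and>\<^sub>w b))
     = (\<Sum>i\<in>UNIV. bf {i} \<and>\<^sub>w ad_e c i (bf {k})) \<and>\<^sub>w b - bf {k} \<and>\<^sub>w (\<Sum>i\<in>UNIV. bf {i} \<and>\<^sub>w ad_e c i b)"
    by (simp add: ad_action_wedge wedge_lin wedge_assoc wedge_singletons_anticomm[of _ k]
        sum.distrib sum_negf sum_subtractf)
  thus ?thesis
    unfolding d_formula_def
    by (simp add: wedge_scale_left wedge_scale_right scaleR_diff_right wedge_neg_left wedge_neg_right)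
qed

lemma single_wedge_nth:
  "(bf {i} \<and>\<^sub>w bf {a}) $ K = (if i \<noteq> a \<and> K = {i, a} then shuffle_sign {i} {a} else 0)"
  by (cases "i = a") (auto simp add: wedge_bf bf_nth insert_commute)

lemma wedge_pair_nth:
  assumes pq: "(p::'n::{finite,linorder}) < q"
  shows "(bf {i} \<and>\<^sub>w bf {a}) $ {p, q}
       = (if i = p \<and> a = q then 1 else 0) + (if i = q \<and> a = p then -1 else (0::real))"
proof -
  have s1: "shuffle_sign {p} {q} = 1" using pq by (intro shuffle_sign_below) simp
  have s2: "shuffle_sign {q} {p} = -1" using shuffle_sign_singletons[of p q] s1 pq by simp
  consider "i = p \<and> a = q" | "i = q \<and> a = p" | "\<not> (i = p \<and> a = q) \<and> \<not> (i = q \<and> a = p)"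
    by blast
  thus ?thesis
  proof cases
    case 1 thus ?thesis using pq s1 by (simp add: single_wedge_nth)
  next
    case 2 thus ?thesis using pq s2 by (simp add: single_wedge_nth insert_commute)
  next
    case 3
    hence "\<not> (i \<noteq> a \<and> {p, q} = {i, a})" by (metis doubleton_eq_iff)
    thus ?thesis using 3 unfolding single_wedge_nth by (simp only: if_False add_0)
  qed
qed

lemma sum2_delta:
  "(\<Sum>i\<in>UNIV. \<Sum>a\<in>UNIV. if i = (p::'n::finite) \<and> a = (q::'n) then (X::real) else 0) = X"
proof -
  have "\<And>i. (\<Sum>a\<in>UNIV. if i = p \<and> a = q then X else 0) = (if i = p then X else 0)"
    by (case_tac "i = p") simp_all
  thus ?thesis by simp
qed

text \<open>On generators the formula agrees with the defining d_1 of d_g: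
  -1/2 (c_{p j q} - c_{q j p}) = c_{p q j} by total antisymmetry.\<close>
lemma d_formula_singleton:
  fixes c :: "'n::{finite,linorder} \<Rightarrow> 'n \<Rightarrow> 'n \<Rightarrow> real"
  assumes skew: "totally_skew c"
  shows "d_formula c (bf {j}) = d1 c j"
proof (rule form_eq_coords)
  fix K :: "'n set"
  have e: "d_formula c (bf {j}) $ K = (- 1/2) * (\<Sum>i\<in>UNIV. \<Sum>a\<in>UNIV. c i j a * (bf {i} \<and>\<^sub>w bf {a}) $ K)"
    by (simp add: d_formula_def ad_e_singleton wedge_lin sum_component)
  show "d_formula c (bf {j}) $ K = d1 c j $ K"
  proof (cases "card K = 2")
    case True
    then obtain p q where pq: "K = {p, q}" "p \<noteq> q" by (meson card_2_iff)
    define p' q' where "p' = min p q" and "q' = max p q"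
    have pq': "K = {p', q'}" "p' < q'" using pq by (auto simp: p'_def q'_def min_def max_def)
    have nq: "p' \<noteq> q'" "q' \<noteq> p'" using pq'(2) by auto
    have coord: "c i j a * (bf {i} \<and>\<^sub>w bf {a}) $ K
        = (if i = p' \<and> a = q' then c p' j q' else 0) + (if i = q' \<and> a = p' then - c q' j p' else 0)"
      for i a
      unfolding pq'(1) wedge_pair_nth[OF pq'(2)]
      by (cases "i = p'"; cases "a = q'"; cases "i = q'"; cases "a = p'") (simp_all add: nq)
    have "d_formula c (bf {j}) $ K = (- 1/2) * (c p' j q' - c q' j p')"
      unfolding e coord by (simp add: sum.distrib sum2_delta)
    also have "\<dots> = c p' q' j"
      using totally_skewD[OF skew, of p' j q'] totally_skewD[OF skew, of q' j p']
        totally_skewD[OF skew, of q' p' j] by simp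
    also have "\<dots> = d1 c j $ K"
    proof -
      have "Min K = p'" "Max K = q'" using pq' by auto
      thus ?thesis using True by (simp add: d1_def)
    qed
    finally show ?thesis .
  next
    case False
    hence "(bf {i} \<and>\<^sub>w bf {a}) $ K = 0" for i a
      by (auto simp: single_wedge_nth)
    thus ?thesis using False by (simp add: e d1_def)
  qed
qed

lemma sorted_insert_min:
  "\<forall>x\<in>I. m < x \<Longrightarrow>
   sorted_list_of_set (insert m (I::'n::{finite,linorder} set)) = m # sorted_list_of_set I"
proof -
  assume a: "\<forall>x\<in>I. m < x"
  have "Min (insert m I) = m" using a by (intro Min_eqI) (auto simp: less_imp_le)
  moreover have "insert m I - {m} = I" using a by auto
  ultimately show ?thesis using sorted_list_of_set_nonempty[of "insert m I"] by simp
qed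

lemma wedge_list_sorted: "wedge_list (sorted_list_of_set J) = bf (J::'n::{finite,linorder} set)"
proof -
  have "finite J" by simp
  thus ?thesis
  proof (induction J rule: finite_linorder_min_induct)
    case empty then show ?case by simp
  next
    case (insert m I)
    thus ?case
      by (subst sorted_insert_min[OF insert.hyps(2)]) (simp add: bf_insert_min[OF insert.hyps(2)])
  qed
qed

lemma d_list_d_formula:
  assumes skew: "totally_skew c"
  shows "d_list c (sorted_list_of_set J) = d_formula c (bf J)"
proof -
  have "finite J" by simp
  thus ?thesis
  proof (induction J rule: finite_linorder_min_induct)
    case empty then show ?case by (simp add: d_formula_def)
  next
    case (insert m I)
    have "d_formula c (bf (insert m I)) = d_formula c (bf {m}) \<and>\<^sub>w bf I - bf {m} \<and>\<^sub>w d_formula c (bf I)"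
      by (simp add: bf_insert_min[OF insert.hyps(2)] d_formula_wedge_singleton)
    thus ?case using insert
      by (subst sorted_insert_min[OF insert.hyps(2)])
        (simp add: wedge_list_sorted d_formula_singleton[OF skew])
  qed
qed

lemma d_g_eq_d_formula:
  assumes skew: "totally_skew c"
  shows "d_g c w = d_formula c w"
proof -
  have "d_g c w = (\<Sum>J\<in>UNIV. w $ J *\<^sub>R d_formula c (bf J))"
    by (simp add: d_g_def d_list_d_formula[OF skew])
  also have "\<dots> = d_formula c w"
    by (subst (2) form_expand) (simp add: linear_sum[OF linear_d_formula] linear_scale[OF linear_d_formula])
  finally show ?thesis .
qed

text \<open>The codifferential \<delta> = 1/2 \<Sum>_i ad(e_i) \<iota>_i, the adjoint of the Koszul formula
  because e_i \<and> _ is adjoint to \<iota>_i and ad(e_i) is skew.\<close>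
definition delta_formula :: "('n::{finite,linorder} \<Rightarrow> 'n \<Rightarrow> 'n \<Rightarrow> real) \<Rightarrow> 'n form \<Rightarrow> 'n form" where
  "delta_formula c w = (1/2) *\<^sub>R (\<Sum>i\<in>UNIV. ad_e c i (interior i w))"

lemma linear_delta_formula: "linear (delta_formula c)"
  by (intro linearI) (simp_all add: delta_formula_def linear_add[OF linear_ad_action]
      linear_scale[OF linear_ad_action] linear_add[OF linear_interior] linear_scale[OF linear_interior]
      sum.distrib scaleR_sum_right scaleR_add_right)

lemma delta_g_eq_delta_formula:
  assumes skew: "totally_skew c"
  shows "delta_g c w = delta_formula c w"
proof (rule form_eq_coords)
  fix I
  have "delta_g c w $ I = d_formula c (bf I) \<bullet> w"
    by (simp add: delta_g_def form_inner_eq d_g_eq_d_formula[OF skew])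
  also have "\<dots> = (- 1/2) * (\<Sum>i\<in>UNIV. (bf {i} \<and>\<^sub>w ad_e c i (bf I)) \<bullet> w)"
    by (simp add: d_formula_def inner_sum_left)
  also have "\<dots> = (- 1/2) * (\<Sum>i\<in>UNIV. ad_e c i (bf I) \<bullet> interior i w)"
    by (simp only: interior_adjoint)
  also have "\<dots> = (1/2) * (\<Sum>i\<in>UNIV. bf I \<bullet> ad_e c i (interior i w))"
    by (simp add: ad_e_skew[OF skew] sum_negf)
  also have "\<dots> = delta_formula c w $ I"
    by (simp add: delta_formula_def inner_bf_left sum_component)
  finally show "delta_g c w $ I = delta_formula c w $ I" .
qed

subsection \<open>Invariant forms commute with d and \<delta> up to sign\<close>

lemma ad_e_interior_comm:
  assumes skew: "totally_skew c"
  shows "interior m (ad_e c m x) = ad_e c m (interior m x)"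
proof -
  have t: "interior m (bf {a} \<and>\<^sub>w interior b x)
      = (if a = m then interior b x else 0) + bf {a} \<and>\<^sub>w interior b (interior m x)" for a b
    using interior_wedge_singleton[of m a "interior b x"] interior_anticomm[of m b x]
    by (simp add: wedge_neg_right)
  have z: "c m b a *\<^sub>R (if a = m then interior b x else 0) = 0" for a b
    using structure_const_diag[OF skew, of m b] by auto
  have "interior m (ad_e c m x) = (\<Sum>a\<in>UNIV. \<Sum>b\<in>UNIV. c m b a *\<^sub>R interior m (bf {a} \<and>\<^sub>w interior b x))"
    by (simp add: ad_e_expand linear_sum[OF linear_interior] linear_scale[OF linear_interior])
  also have "\<dots> = (\<Sum>a\<in>UNIV. \<Sum>b\<in>UNIV. c m b a *\<^sub>R (bf {a} \<and>\<^sub>w interior b (interior m x)))"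
    by (simp only: t scaleR_add_right z add_0)
  also have "\<dots> = ad_e c m (interior m x)"
    by (simp add: ad_e_expand)
  finally show ?thesis .
qed

text \<open>The cross term appearing in \<delta>(p \<and> w).\<close>
definition cross_term :: "('n::{finite,linorder} \<Rightarrow> 'n \<Rightarrow> 'n \<Rightarrow> real) \<Rightarrow> 'n form \<Rightarrow> 'n form \<Rightarrow> 'n form" where
  "cross_term c p w = (\<Sum>i\<in>UNIV. interior i p \<and>\<^sub>w ad_e c i w)"

text \<open>For an invariant l-form p the cross term vanishes: as a function of w it is a
  derivation of parity (-1)^(l-1), and on generators it equals a multiple of
  \<Sum> c_jia e_a \<and> \<iota>_i p = ad(e_j) p = 0.\<close>
lemma cross_term_vanishes:
  fixes c :: "'n::{finite,linorder} \<Rightarrow> 'n \<Rightarrow> 'n \<Rightarrow> real"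
  assumes skew: "totally_skew c"
    and inv: "\<And>x. ad_action c x p = 0" and p: "p \<in> Lam (int l)" and l1: "1 \<le> l"
  shows "cross_term c p w = 0"
proof (rule derivation_vanishes[where D="cross_term c p" and s="(-1) ^ (l - 1)"])
  have iL: "interior i p \<in> Lam (int (l - 1))" for i
    using interior_Lam[OF p, of i] l1 by (simp add: of_nat_diff)
  show "linear (cross_term c p)"
    by (intro linearI) (simp_all add: cross_term_def linear_add[OF linear_ad_action]
        linear_scale[OF linear_ad_action] wedge_lin sum.distrib scaleR_sum_right)
  have cm: "interior i p \<and>\<^sub>w (bf {k} \<and>\<^sub>w y) = (-1) ^ (l - 1) *\<^sub>R (bf {k} \<and>\<^sub>w (interior i p \<and>\<^sub>w y))"
    for i k y
    using wedge_comm[OF iL[of i] bf_singleton_Lam1[of k]]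
    by (simp add: wedge_assoc[symmetric] wedge_scale_left)
  fix k b
  show "cross_term c p (bf {k} \<and>\<^sub>w b)
      = cross_term c p (bf {k}) \<and>\<^sub>w b + (-1) ^ (l - 1) *\<^sub>R (bf {k} \<and>\<^sub>w cross_term c p b)"
    by (simp add: cross_term_def ad_action_wedge wedge_lin cm wedge_assoc sum.distrib scaleR_sum_right)
next
  show "cross_term c p (bf {}) = 0" by (simp add: cross_term_def)
next
  fix j
  have iL: "interior i p \<in> Lam (int (l - 1))" for i
    using interior_Lam[OF p, of i] l1 by (simp add: of_nat_diff)
  have cm: "interior i p \<and>\<^sub>w bf {a} = (-1) ^ (l - 1) *\<^sub>R (bf {a} \<and>\<^sub>w interior i p)" for i a
    using wedge_comm[OF iL[of i] bf_singleton_Lam1[of a]] by simp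
  have "cross_term c p (bf {j})
      = (\<Sum>i\<in>UNIV. \<Sum>a\<in>UNIV. c i j a *\<^sub>R ((-1) ^ (l - 1) *\<^sub>R (bf {a} \<and>\<^sub>w interior i p)))"
    by (simp add: cross_term_def ad_e_singleton wedge_lin cm)
  also have "\<dots> = - ((-1) ^ (l - 1) *\<^sub>R (\<Sum>a\<in>UNIV. \<Sum>i\<in>UNIV. c j i a *\<^sub>R (bf {a} \<and>\<^sub>w interior i p)))"
  proof -
    have "c i j a *\<^sub>R ((-1) ^ (l - 1) *\<^sub>R (bf {a} \<and>\<^sub>w interior i p))
        = - ((-1) ^ (l - 1) *\<^sub>R (c j i a *\<^sub>R (bf {a} \<and>\<^sub>w interior i p)))" for i a
      using totally_skewD(1)[OF skew, of i j a] by simp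
    thus ?thesis by (subst sum.swap) (simp add: sum_negf scaleR_sum_right)
  qed
  also have "(\<Sum>a\<in>UNIV. \<Sum>i\<in>UNIV. c j i a *\<^sub>R (bf {a} \<and>\<^sub>w interior i p)) = ad_e c j p"
    by (simp add: ad_e_expand)
  finally show "cross_term c p (bf {j}) = 0" by (simp add: inv)
qed

lemma d_g_wedge_invariant:
  fixes c :: "'n::{finite,linorder} \<Rightarrow> 'n \<Rightarrow> 'n \<Rightarrow> real"
  assumes skew: "totally_skew c"
    and inv: "\<And>x. ad_action c x p = 0" and p: "p \<in> Lam (int l)"
  shows "d_g c (p \<and>\<^sub>w w) = (-1) ^ l *\<^sub>R (p \<and>\<^sub>w d_g c w)"
proof -
  have cm: "bf {i} \<and>\<^sub>w (p \<and>\<^sub>w y) = (-1) ^ l *\<^sub>R (p \<and>\<^sub>w (bf {i} \<and>\<^sub>w y))" for i y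
    using wedge_comm[OF bf_singleton_Lam1[of i] p] by (simp add: wedge_assoc[symmetric] wedge_scale_left)
  have "d_formula c (p \<and>\<^sub>w w) = (- 1/2) *\<^sub>R (\<Sum>i\<in>UNIV. bf {i} \<and>\<^sub>w (p \<and>\<^sub>w ad_e c i w))"
    using inv by (simp add: d_formula_def ad_action_wedge)
  also have "\<dots> = (-1) ^ l *\<^sub>R (p \<and>\<^sub>w d_formula c w)"
    by (simp add: cm d_formula_def wedge_lin scaleR_sum_right)
  finally show ?thesis by (simp add: d_g_eq_d_formula[OF skew])
qed

lemma delta_g_wedge_invariant:
  fixes c :: "'n::{finite,linorder} \<Rightarrow> 'n \<Rightarrow> 'n \<Rightarrow> real"
  assumes skew: "totally_skew c"
    and inv: "\<And>x. ad_action c x p = 0" and p: "p \<in> Lam (int l)" and l1: "1 \<le> l"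
  shows "delta_g c (p \<and>\<^sub>w w) = (-1) ^ l *\<^sub>R (p \<and>\<^sub>w delta_g c w)"
proof -
  have first: "(\<Sum>i\<in>UNIV. ad_e c i (interior i p)) = 0"
    by (simp add: ad_e_interior_comm[OF skew, symmetric] inv)
  have "delta_formula c (p \<and>\<^sub>w w) = (1/2) *\<^sub>R (\<Sum>i\<in>UNIV. ad_e c i (interior i p) \<and>\<^sub>w w
        + interior i p \<and>\<^sub>w ad_e c i w + (-1) ^ l *\<^sub>R (p \<and>\<^sub>w ad_e c i (interior i w)))"
    by (simp add: delta_formula_def interior_wedge[OF p] linear_add[OF linear_ad_action]
        linear_scale[OF linear_ad_action] ad_action_wedge inv)
  also have "\<dots> = (1/2) *\<^sub>R ((\<Sum>i\<in>UNIV. ad_e c i (interior i p)) \<and>\<^sub>w w)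
        + (1/2) *\<^sub>R cross_term c p w + (-1) ^ l *\<^sub>R (p \<and>\<^sub>w delta_formula c w)"
    by (simp add: cross_term_def delta_formula_def wedge_lin sum.distrib scaleR_add_right scaleR_sum_right)
  also have "\<dots> = (-1) ^ l *\<^sub>R (p \<and>\<^sub>w delta_formula c w)"
    by (simp add: first cross_term_vanishes[OF skew inv p l1])
  finally show ?thesis by (simp add: delta_g_eq_delta_formula[OF skew])
qed

lemma wedge_preserves_range:
  assumes lin: "linear D" and comm: "\<And>w. D (p \<and>\<^sub>w w) = s *\<^sub>R (p \<and>\<^sub>w D w)" and s: "s * s = 1"
    and "\<omega> \<in> range D"
  shows "p \<and>\<^sub>w \<omega> \<in> range D"
proof -
  obtain \<eta> where \<omega>: "\<omega> = D \<eta>" using assms(4) by auto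
  have "D (s *\<^sub>R (p \<and>\<^sub>w \<eta>)) = p \<and>\<^sub>w \<omega>"
    by (simp add: linear_scale[OF lin] comm \<omega> s)
  thus ?thesis by (metis rangeI)
qed

subsection \<open>The decomposition Lambda^k = Lambda^k_+ \<oplus> Lambda^k_-\<close>

lemma subspace_Lam_plus: "subspace (Lam_plus p k)"
  using subspace_Lam[of k] unfolding subspace_def Lam_plus_def by (auto simp: wedge_lin)

lemma subspace_Lam_minus: "subspace (Lam_minus p k)"
  using subspace_Lam[of k] unfolding subspace_def Lam_minus_def by (auto simp: form_inner_eq inner_add_left)

lemma Lam_minus_subset: "Lam_minus p k \<subseteq> Lam k"
  by (auto simp: Lam_minus_def)

lemma zero_Lam_minus: "0 \<in> Lam_minus p k"
  using subspace_0[OF subspace_Lam_minus] .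

lemma Lam_minus_Lam_plus_zero: "x \<in> Lam_minus p k \<Longrightarrow> x \<in> Lam_plus p k \<Longrightarrow> x = 0"
  by (auto simp: Lam_minus_def form_inner_eq)

definition starL :: "'n::{finite,linorder} form \<Rightarrow> 'n form \<Rightarrow> 'n form" where
  "starL p = hodge \<circ> L_op p"

lemma starL_apply: "starL p u = hodge (p \<and>\<^sub>w u)"
  by (simp add: starL_def L_op_def)

lemma image_starL: "hodge ` L_op p ` X = starL p ` X"
  by (simp add: starL_def image_comp)

lemma linear_starL: "linear (starL p)"
  by (intro linearI) (simp_all add: starL_apply wedge_lin linear_add[OF linear_hodge]
      linear_scale[OF linear_hodge])

lemma starL_Lam:
  fixes p :: "'n::{finite,linorder} form"
  assumes p: "p \<in> Lam (int l)" and u: "u \<in> Lam (int m)" and klm: "k + l + m = CARD('n)"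
  shows "starL p u \<in> Lam (int k)"
proof -
  have "int CARD('n) - (int l + int m) = int k" using klm by linarith
  thus ?thesis using hodge_Lam[OF wedge_Lam[OF p u]] by (simp add: starL_apply)
qed

text \<open>Part (a) in complementary degrees k + l + m = n: the image of *L_p on Lambda^m is
  orthogonal to ker L_p by adjointness; conversely a k-form z orthogonal to the image
  satisfies 0 = z \<bullet> *L_p(*(p \<and> z)) = \<plusminus> |p \<and> z|^2, so z lies in ker L_p.\<close>
lemma Lam_minus_eq_starL_image:
  fixes p :: "'n::{finite,linorder} form"
  assumes p: "p \<in> Lam (int l)" and klm: "k + l + m = CARD('n)"
  shows "Lam_minus p (int k) = starL p ` Lam (int m)"
proof
  let ?S = "starL p ` Lam (int m)"
  show "?S \<subseteq> Lam_minus p (int k)"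
  proof
    fix b assume "b \<in> ?S"
    then obtain u where u: "u \<in> Lam (int m)" and b: "b = starL p u" by auto
    have "form_inner b g = 0" if "g \<in> Lam_plus p (int k)" for g
    proof -
      have "p \<and>\<^sub>w g = 0" using that by (simp add: Lam_plus_def)
      thus ?thesis using hodge_wedge_adjoint[OF p u, of g]
        by (simp add: b starL_apply form_inner_eq inner_commute)
    qed
    thus "b \<in> Lam_minus p (int k)" using starL_Lam[OF p u klm] b by (simp add: Lam_minus_def)
  qed
  show "Lam_minus p (int k) \<subseteq> ?S"
  proof
    fix b assume b: "b \<in> Lam_minus p (int k)"
    have spS: "span ?S = ?S"
      by (simp add: span_eq_iff real_vector.linear_subspace_image[OF linear_starL subspace_Lam])
    obtain y z where y: "y \<in> span ?S" and zo: "\<And>w. w \<in> span ?S \<Longrightarrow> orthogonal z w"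
        and bz: "b = y + z"
      using orthogonal_subspace_decomp_exists[of ?S b] by blast
    have yS: "y \<in> ?S" using y spS by simp
    then obtain v where "v \<in> Lam (int m)" "y = starL p v" by blast
    hence yL: "y \<in> Lam (int k)" using starL_Lam[OF p _ klm] by simp
    have bL: "b \<in> Lam (int k)" using b Lam_minus_subset by blast
    have zL: "z \<in> Lam (int k)" using subspace_diff[OF subspace_Lam bL yL] bz by (simp add: algebra_simps)
    define w where "w = p \<and>\<^sub>w z"
    have wL: "w \<in> Lam (int (l + k))" using wedge_Lam[OF p zL] by (simp add: w_def)
    have "int CARD('n) - int (l + k) = int m" using klm by linarith
    hence hwL: "hodge w \<in> Lam (int m)" using hodge_Lam[OF wL] by simp
    have "z \<bullet> starL p (hodge w) = 0" using zo[of "starL p (hodge w)"] hwL spS by (auto simp: orthogonal_def)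
    hence "(-1) ^ (l * m) * (w \<bullet> hodge (hodge w)) = 0"
      using hodge_wedge_adjoint[OF p hwL, of z] by (simp add: w_def starL_apply)
    hence "w \<bullet> w = 0" by (simp add: hodge_hodge[OF wL])
    hence "z \<in> Lam_plus p (int k)" using zL by (simp add: Lam_plus_def w_def)
    hence "b \<bullet> z = 0" using b by (simp add: Lam_minus_def form_inner_eq)
    moreover have "y \<bullet> z = 0" using zo[OF y] by (simp add: orthogonal_def inner_commute)
    ultimately have "z = 0" using bz by (simp add: inner_add_left)
    thus "b \<in> ?S" using bz yS by simp
  qed
qed

text \<open>Above degree n - l everything is in ker L_p, so Lambda^k_- vanishes.\<close>
lemma Lam_minus_above:
  fixes p :: "'n::{finite,linorder} form"
  assumes p: "p \<in> Lam (int l)" and big: "int l + k > int CARD('n)"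
  shows "Lam_minus p k = {0}"
proof -
  have "b = 0" if b: "b \<in> Lam_minus p k" for b
  proof -
    have bL: "b \<in> Lam k" using b by (simp add: Lam_minus_def)
    have "p \<and>\<^sub>w b \<in> Lam (int l + k)" by (rule wedge_Lam[OF p bL])
    hence "b \<in> Lam_plus p k" using bL Lam_above_top[OF big] by (simp add: Lam_plus_def)
    thus ?thesis using Lam_minus_Lam_plus_zero[OF b] by blast
  qed
  thus ?thesis using zero_Lam_minus by blast
qed

text \<open>Part (a) for every degree k \<ge> 0 (both sides are zero when k > n - l).\<close>
lemma Lam_minus_eq_starL_image_int:
  fixes p :: "'n::{finite,linorder} form"
  assumes p: "p \<in> Lam (int l)" and k: "0 \<le> k"
  shows "Lam_minus p k = starL p ` Lam (int CARD('n) - int l - k)"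
proof (cases "k \<le> int CARD('n) - int l")
  case True
  have "nat k + l + nat (int CARD('n) - int l - k) = CARD('n)" using True k by linarith
  from Lam_minus_eq_starL_image[OF p this] show ?thesis using True k by simp
next
  case False
  have "Lam_minus p k = {0}" using False by (intro Lam_minus_above[OF p]) linarith
  moreover have "Lam (int CARD('n) - int l - k) = ({0} :: 'n form set)"
    using False by (intro Lam_negative) simp
  ultimately show ?thesis by (simp add: linear_0[OF linear_starL])
qed

text \<open>Restricting *L_p to Lambda_- does not shrink its image, since it kills Lambda_+.\<close>
lemma starL_image_Lam_minus:
  fixes p :: "'n::{finite,linorder} form"
  shows "starL p ` Lam j = starL p ` Lam_minus p j"
proof
  show "starL p ` Lam_minus p j \<subseteq> starL p ` Lam j"
    using Lam_minus_subset by blast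
  show "starL p ` Lam j \<subseteq> starL p ` Lam_minus p j"
  proof
    fix b assume "b \<in> starL p ` Lam j"
    then obtain u where u: "u \<in> Lam j" and b: "b = starL p u" by auto
    have spP: "span (Lam_plus p j) = Lam_plus p j" by (simp add: span_eq_iff subspace_Lam_plus)
    obtain y z where y: "y \<in> span (Lam_plus p j)"
        and zo: "\<And>w. w \<in> span (Lam_plus p j) \<Longrightarrow> orthogonal z w" and uz: "u = y + z"
      using orthogonal_subspace_decomp_exists[of "Lam_plus p j" u] by blast
    have "y \<in> Lam_plus p j" using y spP by simp
    hence yL: "y \<in> Lam j" and py: "p \<and>\<^sub>w y = 0" by (auto simp: Lam_plus_def)
    have zL: "z \<in> Lam j" using subspace_diff[OF subspace_Lam u yL] uz by (simp add: algebra_simps)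
    have "orthogonal z w" if "w \<in> Lam_plus p j" for w using zo that spP by simp
    hence zM: "z \<in> Lam_minus p j" using zL by (auto simp: Lam_minus_def form_inner_eq orthogonal_def)
    have "b = starL p z" using b uz py by (simp add: starL_apply wedge_lin)
    thus "b \<in> starL p ` Lam_minus p j" using zM by blast
  qed
qed

lemma inj_on_starL:
  fixes p :: "'n::{finite,linorder} form"
  shows "inj_on (starL p) (Lam_minus p j)"
proof (rule inj_onI)
  fix x y assume x: "x \<in> Lam_minus p j" and y: "y \<in> Lam_minus p j" and e: "starL p x = starL p y"
  have d: "x - y \<in> Lam_minus p j" by (rule subspace_diff[OF subspace_Lam_minus x y])
  have "hodge (p \<and>\<^sub>w (x - y)) = 0" using e by (simp add: starL_apply wedge_lin linear_diff[OF linear_hodge])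
  hence "p \<and>\<^sub>w (x - y) = 0" by (rule hodge_eq_zero)
  hence "x - y \<in> Lam_plus p j" using d Lam_minus_subset by (auto simp: Lam_plus_def)
  thus "x = y" using Lam_minus_Lam_plus_zero[OF d] by simp
qed

lemma starL_bij:
  fixes p :: "'n::{finite,linorder} form"
  assumes p: "p \<in> Lam (int l)" and k: "0 \<le> k"
  shows "bij_betw (starL p) (Lam_minus p (int CARD('n) - int l - k)) (Lam_minus p k)"
proof -
  have "starL p ` Lam_minus p (int CARD('n) - int l - k) = Lam_minus p k"
    using Lam_minus_eq_starL_image_int[OF p k] starL_image_Lam_minus[of p] by simp
  thus ?thesis using inj_on_starL by (simp add: bij_betw_def)
qed

text \<open>p \<and> e_B \<noteq> 0 whenever B avoids a support set of p, so *L_p is nonzero on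
  Lambda^m for m + l \<le> n.\<close>
lemma starL_nonzero:
  fixes p :: "'n::{finite,linorder} form"
  assumes p: "p \<in> Lam (int l)" and pnz: "p \<noteq> 0" and ml: "m + l \<le> CARD('n)"
  shows "\<exists>u\<in>Lam (int m). starL p u \<noteq> 0"
proof -
  obtain A where pA: "p $ A \<noteq> 0" using pnz by (auto simp: vec_eq_iff)
  have "card (- A) = CARD('n) - l" using Lam_supp_nat[OF p pA] by (simp add: card_compl)
  hence "m \<le> card (- A)" using ml by simp
  then obtain B where B: "B \<subseteq> - A" "card B = m" by (meson obtain_subset_with_card_n)
  have "(A \<union> B) - B = A" using B by auto
  hence "(p \<and>\<^sub>w bf B) $ (A \<union> B) \<noteq> 0" using pA by (simp add: wedge_bf_right)
  hence "p \<and>\<^sub>w bf B \<noteq> 0" by auto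
  hence "starL p (bf B) \<noteq> 0" using hodge_eq_zero by (metis starL_apply)
  moreover have "bf B \<in> Lam (int m)" using bf_Lam[of B] B by simp
  ultimately show ?thesis by blast
qed

lemma Lam_minus_nontrivial_iff:
  fixes p :: "'n::{finite,linorder} form"
  assumes p: "p \<in> Lam (int l)" and pnz: "p \<noteq> 0" and k: "0 \<le> k"
  shows "Lam_minus p k \<noteq> {0} \<longleftrightarrow> k \<le> int CARD('n) - int l"
proof
  assume "Lam_minus p k \<noteq> {0}"
  thus "k \<le> int CARD('n) - int l" using Lam_minus_above[OF p, of k] by linarith
next
  assume kl: "k \<le> int CARD('n) - int l"
  define m where "m = nat (int CARD('n) - int l - k)"
  have "m + l \<le> CARD('n)" using kl k by (simp add: m_def)
  then obtain u where "u \<in> Lam (int m)" "starL p u \<noteq> 0" using starL_nonzero[OF p pnz] by blast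
  moreover have "Lam_minus p k = starL p ` Lam (int m)"
    using Lam_minus_eq_starL_image_int[OF p k] kl by (simp add: m_def)
  ultimately show "Lam_minus p k \<noteq> {0}" by auto
qed

lemma dim_Lam_minus_0:
  fixes p :: "'n::{finite,linorder} form"
  assumes p: "p \<in> Lam (int l)" and pnz: "p \<noteq> 0" and l: "l \<le> CARD('n)"
  shows "dim (Lam_minus p 0) = 1"
proof -
  have "Lam_minus p 0 \<subseteq> span {bf {}}" using Lam_minus_subset Lam0_span by blast
  hence "dim (Lam_minus p 0) \<le> card {bf {} :: 'n form}" by (rule dim_le_card) simp
  moreover have "dim (Lam_minus p 0) \<noteq> 0"
  proof
    assume "dim (Lam_minus p 0) = 0"
    hence "Lam_minus p 0 \<subseteq> {0}" by simp
    moreover have "Lam_minus p 0 \<noteq> {0}" using Lam_minus_nontrivial_iff[OF p pnz] l by simp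
    ultimately show False using zero_Lam_minus by blast
  qed
  ultimately show ?thesis by (simp del: dim_eq_0)
qed

lemma dim_eq_bij:
  fixes A B :: "'n::{finite,linorder} form set"
  assumes b: "bij_betw f A B" and s: "subspace A" and lf: "linear f"
  shows "dim B = dim A"
proof -
  have "inj_on f (span A)" using b s by (metis bij_betw_def span_eq_iff)
  hence "dim (f ` A) = dim A" by (rule dim_image_eq[OF lf])
  thus ?thesis using b by (simp add: bij_betw_def)
qed

subsection \<open>Degree one: simplicity\<close>

definition vec_form :: "real^('n::{finite,linorder}) \<Rightarrow> 'n form" where
  "vec_form x = (\<Sum>i\<in>UNIV. x $ i *\<^sub>R bf {i})"

lemma linear_vec_form: "linear vec_form"
  by (intro linearI) (simp_all add: vec_form_def scaleR_add_left sum.distrib scaleR_sum_right)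

lemma vec_form_axis: "vec_form (axis i 1) = bf {i}"
proof -
  have "axis i (1::real) $ b *\<^sub>R bf {b} = (if b = i then bf {i} else 0)" for b
    by (simp add: axis_def)
  thus ?thesis by (simp add: vec_form_def)
qed

lemma Lam1_vec_form:
  fixes b :: "'n::{finite,linorder} form"
  assumes b: "b \<in> Lam 1"
  shows "vec_form (\<chi> i. b $ {i}) = b"
proof (rule form_eq_coords)
  fix K :: "'n set"
  have t: "(\<chi> i. b $ {i}) $ i *\<^sub>R bf {i} $ K = (if K = {i} then b $ K else 0)" for i
    by (simp add: bf_nth)
  have coord: "vec_form (\<chi> i. b $ {i}) $ K = (\<Sum>i\<in>UNIV. if K = {i} then b $ K else 0)"
    unfolding vec_form_def sum_component vector_scaleR_component by (simp only: t)
  show "vec_form (\<chi> i. b $ {i}) $ K = b $ K"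
  proof (cases "\<exists>j. K = {j}")
    case True
    then obtain j where "K = {j}" by blast
    thus ?thesis using coord by simp
  next
    case False
    hence "card K \<noteq> 1" by (metis card_1_singleton_iff One_nat_def)
    hence "b $ K = 0" using Lam_supp[OF b] by force
    thus ?thesis using coord False by simp
  qed
qed

lemma ad_action_vec_form: "ad_action c y (vec_form x) = vec_form (bracket c y x)"
proof -
  have "interior j (vec_form x) = x $ j *\<^sub>R bf {}" for j
  proof -
    have "x $ b *\<^sub>R interior j (bf {b}) = (if b = j then x $ j *\<^sub>R bf {} else 0)" for b
      by (simp add: interior_singleton)
    thus ?thesis by (simp add: vec_form_def linear_sum[OF linear_interior] linear_scale[OF linear_interior])
  qed
  hence "ad_action c y (vec_form x)
      = (\<Sum>i\<in>UNIV. \<Sum>j\<in>UNIV. (bracket c y (axis j 1) $ i * x $ j) *\<^sub>R bf {i})"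
    by (simp add: ad_action_def wedge_scale_right)
  also have "\<dots> = vec_form (bracket c y x)"
  proof -
    have "bracket c y x $ i = (\<Sum>j\<in>UNIV. bracket c y (axis j 1) $ i * x $ j)" for i
    proof -
      have "(\<Sum>j\<in>UNIV. bracket c y (axis j 1) $ i * x $ j) = (\<Sum>j\<in>UNIV. \<Sum>a\<in>UNIV. y $ a * x $ j * c a j i)"
        by (simp add: bracket_axis_right sum_distrib_right sum_distrib_left mult_ac)
      also have "\<dots> = (\<Sum>a\<in>UNIV. \<Sum>j\<in>UNIV. y $ a * x $ j * c a j i)" by (rule sum.swap)
      finally show ?thesis by (simp add: bracket_def)
    qed
    thus ?thesis by (simp add: vec_form_def scaleR_sum_left)
  qed
  finally show ?thesis .
qed

lemma bracket_antisym:
  assumes lie: "is_lie_algebra c"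
  shows "bracket c x y = - bracket c y x"
proof -
  have "bracket c x y $ k = (- bracket c y x) $ k" for k
  proof -
    have "bracket c x y $ k = (\<Sum>a\<in>UNIV. \<Sum>b\<in>UNIV. x $ a * y $ b * c a b k)"
      by (simp add: bracket_def)
    also have "\<dots> = (\<Sum>b\<in>UNIV. \<Sum>a\<in>UNIV. x $ a * y $ b * c a b k)"
      by (rule sum.swap)
    also have "\<dots> = (\<Sum>b\<in>UNIV. \<Sum>a\<in>UNIV. - (y $ b * x $ a * c b a k))"
    proof -
      have "x $ a * y $ b * c a b k = - (y $ b * x $ a * c b a k)" for a b
        using structure_const_antisym[OF lie, of a b k] by simp
      thus ?thesis by simp
    qed
    also have "\<dots> = (- bracket c y x) $ k" by (simp add: bracket_def sum_negf)
    finally show ?thesis .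
  qed
  thus ?thesis by (simp add: vec_eq_iff)
qed

text \<open>Lambda^1_+ = 0: {x. p \<and> x = 0} is an ideal of g by invariance of p, it is not all of
  g since p \<and> e_i \<noteq> 0 for i outside a support set of p, hence it is zero by simplicity.\<close>
lemma Lam_plus_1_trivial:
  fixes c :: "'n::{finite,linorder} \<Rightarrow> 'n \<Rightarrow> 'n \<Rightarrow> real"
  assumes g: "compact_simple_orthonormal c" and p: "p \<in> Lam (int l)" and pnz: "p \<noteq> 0"
    and inv: "\<And>x. ad_action c x p = 0" and ln: "l < CARD('n)"
  shows "Lam_plus p 1 = {0}"
proof -
  have lie: "is_lie_algebra c" and simple: "\<And>S. lie_ideal c S \<Longrightarrow> S = {0} \<or> S = UNIV"
    using g by (simp_all add: compact_simple_orthonormal_def)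
  define S where "S = {x. p \<and>\<^sub>w vec_form x = 0}"
  have "subspace S"
    unfolding subspace_def S_def
    by (simp add: linear_0[OF linear_vec_form] linear_add[OF linear_vec_form]
        linear_scale[OF linear_vec_form] wedge_lin)
  moreover have "bracket c x y \<in> S" if x: "x \<in> S" for x y
  proof -
    have "ad_action c y (p \<and>\<^sub>w vec_form x) = 0" using x by (simp add: S_def linear_0[OF linear_ad_action])
    hence "p \<and>\<^sub>w vec_form (bracket c y x) = 0" by (simp add: ad_action_wedge inv ad_action_vec_form)
    thus ?thesis by (simp add: S_def bracket_antisym[OF lie, of x] linear_neg[OF linear_vec_form] wedge_lin)
  qed
  ultimately have "S = {0} \<or> S = UNIV" by (intro simple) (simp add: lie_ideal_def)
  moreover have "S \<noteq> UNIV"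
  proof
    assume SU: "S = UNIV"
    obtain A where pA: "p $ A \<noteq> 0" using pnz by (auto simp: vec_eq_iff)
    hence "A \<noteq> UNIV" using Lam_supp_nat[OF p pA] ln by auto
    then obtain i where iA: "i \<notin> A" by auto
    have "axis i 1 \<in> S" using SU by simp
    hence "p \<and>\<^sub>w bf {i} = 0" by (simp add: S_def vec_form_axis)
    hence "(p \<and>\<^sub>w bf {i}) $ (insert i A) = 0" by simp
    moreover have "insert i A - {i} = A" using iA by auto
    ultimately show False using pA by (simp add: wedge_bf_right)
  qed
  ultimately have S0: "S = {0}" by blast
  have "b = 0" if b: "b \<in> Lam_plus p 1" for b
  proof -
    have bL: "b \<in> Lam 1" and pb: "p \<and>\<^sub>w b = 0" using b by (auto simp: Lam_plus_def)
    hence "(\<chi> i. b $ {i}) \<in> S" by (simp add: S_def Lam1_vec_form)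
    thus ?thesis using S0 Lam1_vec_form[OF bL] linear_0[OF linear_vec_form] by auto
  qed
  thus ?thesis using subspace_0[OF subspace_Lam_plus] by blast
qed

lemma Lam_minus_1:
  fixes c :: "'n::{finite,linorder} \<Rightarrow> 'n \<Rightarrow> 'n \<Rightarrow> real"
  assumes "compact_simple_orthonormal c" "p \<in> Lam (int l)" "p \<noteq> 0"
    and "\<And>x. ad_action c x p = 0" "l < CARD('n)"
  shows "Lam_minus p 1 = Lam 1"
  using Lam_plus_1_trivial[OF assms] by (auto simp: Lam_minus_def form_inner_eq)

lemma L_op_commutes_with_d_delta:
  fixes c :: "'n::{finite,linorder} \<Rightarrow> 'n \<Rightarrow> 'n \<Rightarrow> real"
  assumes skew: "totally_skew c"
    and inv: "\<And>x. ad_action c x p = 0" and p: "p \<in> Lam (int l)" and l1: "1 \<le> l"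
  shows "\<forall>\<omega>. (-1) ^ (l + 1) *\<^sub>R L_op p (d_g c \<omega>) + d_g c (L_op p \<omega>) = 0"
    and "\<forall>\<omega>. (-1) ^ (l + 1) *\<^sub>R L_op p (delta_g c \<omega>) + delta_g c (L_op p \<omega>) = 0"
    and "\<forall>\<omega>. harmonic c \<omega> \<longrightarrow> harmonic c (L_op p \<omega>)"
    and "\<forall>\<omega>. \<omega> \<in> range (d_g c) \<longrightarrow> L_op p \<omega> \<in> range (d_g c)"
    and "\<forall>\<omega>. \<omega> \<in> range (delta_g c) \<longrightarrow> L_op p \<omega> \<in> range (delta_g c)"
proof -
  have d: "d_g c (p \<and>\<^sub>w w) = (-1) ^ l *\<^sub>R (p \<and>\<^sub>w d_g c w)" for w
    by (rule d_g_wedge_invariant[OF skew inv p])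
  have \<delta>: "delta_g c (p \<and>\<^sub>w w) = (-1) ^ l *\<^sub>R (p \<and>\<^sub>w delta_g c w)" for w
    by (rule delta_g_wedge_invariant[OF skew inv p l1])
  have "d_g c = d_formula c" "delta_g c = delta_formula c"
    by (simp_all add: fun_eq_iff d_g_eq_d_formula[OF skew] delta_g_eq_delta_formula[OF skew])
  hence lin_d: "linear (d_g c)" and lin_\<delta>: "linear (delta_g c)"
    using linear_d_formula linear_delta_formula by simp_all
  show "\<forall>\<omega>. (-1) ^ (l + 1) *\<^sub>R L_op p (d_g c \<omega>) + d_g c (L_op p \<omega>) = 0"
    and "\<forall>\<omega>. (-1) ^ (l + 1) *\<^sub>R L_op p (delta_g c \<omega>) + delta_g c (L_op p \<omega>) = 0"
    and "\<forall>\<omega>. harmonic c \<omega> \<longrightarrow> harmonic c (L_op p \<omega>)"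
    by (simp_all add: L_op_def harmonic_def d \<delta>)
  show "\<forall>\<omega>. \<omega> \<in> range (d_g c) \<longrightarrow> L_op p \<omega> \<in> range (d_g c)"
    and "\<forall>\<omega>. \<omega> \<in> range (delta_g c) \<longrightarrow> L_op p \<omega> \<in> range (delta_g c)"
    using wedge_preserves_range[OF lin_d d] wedge_preserves_range[OF lin_\<delta> \<delta>]
    by (simp_all add: L_op_def)
qed

theorem proposition5p4:
  fixes c :: "'n::{finite,linorder} \<Rightarrow> 'n \<Rightarrow> 'n \<Rightarrow> real"
    and \<phi> :: "'n form" and l :: nat
  defines "n \<equiv> CARD('n)"
  assumes g: "compact_simple_orthonormal c"
    and phi_deg: "\<phi> \<in> Lam (int l)"
    and phi_nz: "\<phi> \<noteq> 0"
    and phi_inv: "ad_invariant c \<phi>"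
    and l_ge: "3 \<le> l" and l_le: "l + 3 \<le> n"
  shows
    \<comment> \<open>(a)\<close>
    "(\<forall>k::int. 0 \<le> k \<and> k \<le> int n \<longrightarrow>
        Lam_minus \<phi> k = hodge ` L_op \<phi> ` Lam (int n - int l - k) \<and>
        Lam_minus \<phi> k = hodge ` L_op \<phi> ` Lam_minus \<phi> (int n - int l - k))
   \<comment> \<open>(b)\<close>
   \<and> (\<forall>k::int. 0 \<le> k \<and> k \<le> int n \<longrightarrow> (Lam_minus \<phi> k \<noteq> {0} \<longleftrightarrow> k \<le> int n - int l))
   \<comment> \<open>(c)\<close>
   \<and> (\<forall>k::int. 0 \<le> k \<and> k \<le> int n - int l \<longrightarrow>
        bij_betw (hodge \<circ> L_op \<phi>) (Lam_minus \<phi> (int n - int l - k)) (Lam_minus \<phi> k))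
   \<comment> \<open>in particular\<close>
   \<and> dim (Lam_minus \<phi> 0) = 1 \<and> dim (Lam_minus \<phi> (int n - int l)) = 1
   \<and> dim (Lam_minus \<phi> 1) = dim (Lam 1 :: 'n form set)
   \<and> dim (Lam_minus \<phi> (int n - int l - 1)) = dim (Lam 1 :: 'n form set)
   \<and> (\<forall>k::int. int n - int l + 1 \<le> k \<and> k \<le> int n \<longrightarrow> Lam_minus \<phi> k = {0})
   \<comment> \<open>(d)\<close>
   \<and> (\<forall>\<omega>. (-1) ^ (l + 1) *\<^sub>R L_op \<phi> (d_g c \<omega>) + d_g c (L_op \<phi> \<omega>) = 0)
   \<and> (\<forall>\<omega>. (-1) ^ (l + 1) *\<^sub>R L_op \<phi> (delta_g c \<omega>) + delta_g c (L_op \<phi> \<omega>) = 0)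
   \<and> (\<forall>\<omega>. harmonic c \<omega> \<longrightarrow> harmonic c (L_op \<phi> \<omega>))
   \<and> (\<forall>\<omega>. \<omega> \<in> range (d_g c) \<longrightarrow> L_op \<phi> \<omega> \<in> range (d_g c))
   \<and> (\<forall>\<omega>. \<omega> \<in> range (delta_g c) \<longrightarrow> L_op \<phi> \<omega> \<in> range (delta_g c))"
proof -
  have skew: "totally_skew c" using g by (rule compact_simple_totally_skew)
  have inv: "\<And>x. ad_action c x \<phi> = 0" using phi_inv by (simp add: ad_invariant_def)
  have image_eq: "Lam_minus \<phi> k = hodge ` L_op \<phi> ` Lam (int n - int l - k)
      \<and> Lam_minus \<phi> k = hodge ` L_op \<phi> ` Lam_minus \<phi> (int n - int l - k)" if "0 \<le> k" for k
    using Lam_minus_eq_starL_image_int[OF phi_deg that] starL_image_Lam_minus[of \<phi>]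
    by (simp add: image_starL n_def)
  have bij: "bij_betw (starL \<phi>) (Lam_minus \<phi> (int n - int l - k)) (Lam_minus \<phi> k)" if "0 \<le> k" for k
    using starL_bij[OF phi_deg that] by (simp add: n_def)
  have dim0: "dim (Lam_minus \<phi> 0) = 1" using dim_Lam_minus_0[OF phi_deg phi_nz] l_le n_def by simp
  have dim1: "dim (Lam_minus \<phi> 1) = dim (Lam 1 :: 'n form set)"
    using Lam_minus_1[OF g phi_deg phi_nz inv] l_le n_def by simp
  have part_a: "\<forall>k::int. 0 \<le> k \<and> k \<le> int n \<longrightarrow>
      Lam_minus \<phi> k = hodge ` L_op \<phi> ` Lam (int n - int l - k) \<and>
      Lam_minus \<phi> k = hodge ` L_op \<phi> ` Lam_minus \<phi> (int n - int l - k)"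
    using image_eq by blast
  have part_b: "\<forall>k::int. 0 \<le> k \<and> k \<le> int n \<longrightarrow> (Lam_minus \<phi> k \<noteq> {0} \<longleftrightarrow> k \<le> int n - int l)"
    using Lam_minus_nontrivial_iff[OF phi_deg phi_nz] by (simp add: n_def)
  have part_c: "\<forall>k::int. 0 \<le> k \<and> k \<le> int n - int l \<longrightarrow>
      bij_betw (hodge \<circ> L_op \<phi>) (Lam_minus \<phi> (int n - int l - k)) (Lam_minus \<phi> k)"
    using bij by (simp add: starL_def)
  have dim_top: "dim (Lam_minus \<phi> (int n - int l)) = 1"
    using dim_eq_bij[OF bij[of "int n - int l"] subspace_Lam_minus linear_starL] dim0 l_le by simp
  have dim_top1: "dim (Lam_minus \<phi> (int n - int l - 1)) = dim (Lam 1 :: 'n form set)"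
    using dim_eq_bij[OF bij[of "int n - int l - 1"] subspace_Lam_minus linear_starL] dim1 l_le by simp
  have vanish: "\<forall>k::int. int n - int l + 1 \<le> k \<and> k \<le> int n \<longrightarrow> Lam_minus \<phi> k = {0}"
    using Lam_minus_above[OF phi_deg] by (simp add: n_def)
  have "1 \<le> l" using l_ge by simp
  note part_d = L_op_commutes_with_d_delta[OF skew inv phi_deg this]
  show ?thesis
    by (intro conjI) (rule part_a part_b part_c dim0 dim_top dim1 dim_top1 vanish part_d)+
qed

end
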